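(* Let $k$ be an algebraically closed field and $R=k[x_0,x_1,x_2]$. Let $r\geq 2$ and let $d_1\geq d_2\geq\cdots\geq d_r\geq 1$ be integers, $d=d_1+\cdots+d_r$, $D=\sum_{1\leq i<j\leq r}d_id_j$. Let $F=F_1\cdots F_r$ be a general product of forms $F_i\in R_{d_i}$, and let $I_F\subset R$ be the ideal generated by $F/F_1,\dots,F/F_r$. Then the Hilbert function of $R/I_F$ satisfies: (i) $H(R/I_F,j)=D$ for all $j\geq d-2$; (ii) for $j\leq d-1$, $$H(R/I_F,j)=\binom{j+2}{2}-\sum_{i=1}^r\binom{\max\{j-d+d_i,\,-1\}+2}{2}.$$
   Context: Here "general" means $[F]$ is a general point of the variety $\mathbb{X}_{2,\lambda}\subset\mathbb{P}(R_d)$ of forms of degree $d$ that factor as a product of forms of degrees $d_1,\dots,d_r$. $H(R/I_F,j)=\dim_k (R/I_F)_j$. *)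

theory Defs
  imports Main "HOL-Computational_Algebra.Polynomial" "HOL-Library.Poly_Mapping" "HOL-Library.Function_Algebras"
begin

text \<open>Polynomials in R = k[x0,x1,x2] are represented by their coefficient
functions on exponent triples (a,b,c) (the monomial x0^a x1^b x2^c);
genuine polynomials are the finitely supported ones.\<close>

type_synonym mon = "nat \<times> nat \<times> nat"
type_synonym 'a pol3 = "mon \<Rightarrow> 'a"

definition mdeg :: "mon \<Rightarrow> nat" where
  "mdeg m = (case m of (a, b, c) \<Rightarrow> a + b + c)"

definition below :: "mon \<Rightarrow> mon set" where
  "below m = (case m of (a, b, c) \<Rightarrow> {0..a} \<times> {0..b} \<times> {0..c})"

definition msub :: "mon \<Rightarrow> mon \<Rightarrow> mon" where
  "msub m p = (case m of (a, b, c) \<Rightarrow> case p of (a', b', c') \<Rightarrow> (a - a', b - b', c - c'))"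

definition is_poly :: "'a::zero pol3 \<Rightarrow> bool" where
  "is_poly f \<longleftrightarrow> finite {m. f m \<noteq> 0}"

definition pmul :: "'a::comm_ring_1 pol3 \<Rightarrow> 'a pol3 \<Rightarrow> 'a pol3" where
  "pmul f g = (\<lambda>m. \<Sum>p\<in>below m. f p * g (msub m p))"

definition pone :: "'a::comm_ring_1 pol3" where
  "pone = (\<lambda>m. if m = (0, 0, 0) then 1 else 0)"

fun pprod :: "'a::comm_ring_1 pol3 list \<Rightarrow> 'a pol3" where
  "pprod [] = pone"
| "pprod (f # fs) = pmul f (pprod fs)"

definition form_of :: "nat \<Rightarrow> (mon \<Rightarrow> 'a::zero) \<Rightarrow> 'a pol3" where
  "form_of e c = (\<lambda>m. if mdeg m = e then c m else 0)"

text \<open>F / F_i = product of the F_l, l \<noteq> i (factors indexed 0..r-1).\<close>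
definition cofactor :: "nat \<Rightarrow> (nat \<Rightarrow> 'a::comm_ring_1 pol3) \<Rightarrow> nat \<Rightarrow> 'a pol3" where
  "cofactor r Fs i = pprod (map Fs (filter (\<lambda>l. l \<noteq> i) [0..<r]))"

definition gen_ideal :: "nat \<Rightarrow> (nat \<Rightarrow> 'a::comm_ring_1 pol3) \<Rightarrow> 'a pol3 set" where
  "gen_ideal r G = {f. \<exists>h. (\<forall>i<r. is_poly (h i)) \<and> f = (\<lambda>m. \<Sum>i<r. pmul (h i) (G i) m)}"

definition deg_part :: "'a::zero pol3 set \<Rightarrow> nat \<Rightarrow> 'a pol3 set" where
  "deg_part I j = {f \<in> I. \<forall>m. f m \<noteq> 0 \<longrightarrow> mdeg m = j}"

definition fscale :: "'a::field \<Rightarrow> 'a pol3 \<Rightarrow> 'a pol3" where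
  "fscale a f = (\<lambda>m. a * f m)"

definition hilbert_quot :: "'a::field pol3 set \<Rightarrow> nat \<Rightarrow> nat" where
  "hilbert_quot I j = card {m. mdeg m = j} - vector_space.dim fscale (deg_part I j)"

definition I_F :: "nat \<Rightarrow> (nat \<Rightarrow> 'a::comm_ring_1 pol3) \<Rightarrow> 'a pol3 set" where
  "I_F r Fs = gen_ideal r (cofactor r Fs)"

type_synonym ('v, 'a) mpoly = "('v \<Rightarrow>\<^sub>0 nat) \<Rightarrow>\<^sub>0 'a"

definition mpeval :: "('v, 'a::comm_ring_1) mpoly \<Rightarrow> ('v \<Rightarrow> 'a) \<Rightarrow> 'a" where
  "mpeval G x = (\<Sum>e\<in>Poly_Mapping.keys G. Poly_Mapping.lookup G e * (\<Prod>v\<in>Poly_Mapping.keys (e :: 'v \<Rightarrow>\<^sub>0 nat). x v ^ Poly_Mapping.lookup e v))"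

text \<open>A property P of r-tuples of forms of degrees ds 0, ..., ds (r-1)
(given by a coefficient vector c, variable (i,m) = coefficient of monomial m in F_i)
holds for a general tuple: it holds on a nonempty Zariski-open subset of the parameter
space, i.e. outside the zero locus of some nonzero polynomial in the coefficients.\<close>
definition general_holds :: "nat \<Rightarrow> (nat \<Rightarrow> nat) \<Rightarrow> ((nat \<times> mon \<Rightarrow> 'a::comm_ring_1) \<Rightarrow> bool) \<Rightarrow> bool" where
  "general_holds r ds P \<longleftrightarrow>
     (\<exists>G :: (nat \<times> mon, 'a) mpoly. G \<noteq> 0 \<and>
        (\<forall>mon_e\<in>Poly_Mapping.keys G. \<forall>v\<in>Poly_Mapping.keys mon_e. fst v < r \<and> mdeg (snd v) = ds (fst v)) \<and>
        (\<forall>c. mpeval G c \<noteq> 0 \<longrightarrow> P c))"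

definition forms_of :: "(nat \<Rightarrow> nat) \<Rightarrow> (nat \<times> mon \<Rightarrow> 'a::zero) \<Rightarrow> nat \<Rightarrow> 'a pol3" where
  "forms_of ds c i = form_of (ds i) (\<lambda>m. c (i, m))"

end

theory Submission
  imports Defs "HOL-Computational_Algebra.Formal_Power_Series" "Jordan_Normal_Form.Determinant"
begin

text \<open>Call a tuple of forms good if every \<open>F\<^sub>i\<close> has a nonzero coefficient at \<open>x\<^sub>2^d\<^sub>i\<close> and the
binary forms \<open>F\<^sub>i(0,x\<^sub>1,x\<^sub>2)\<close> are pairwise coprime. For a good tuple, \<open>F\<^sub>i\<close> divides \<open>h F\<^sub>l\<close>
(\<open>l \<noteq> i\<close>) only if it divides \<open>h\<close>: modulo \<open>x\<^sub>0\<close> this is coprimality of binary forms, and the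
divisibility lifts \<open>x\<^sub>0\<close>-adically by induction on the degree. Hence a relation
\<open>\<Sum> h\<^sub>i F/F\<^sub>i = 0\<close> forces \<open>h\<^sub>i = F\<^sub>i g\<^sub>i\<close> with \<open>\<Sum> g\<^sub>i = 0\<close>, so in degree \<open>j\<close> the map
\<open>(h\<^sub>i) \<mapsto> \<Sum> h\<^sub>i F/F\<^sub>i\<close> on the direct sum of the \<open>R\<^bsub>j-d+d\<^sub>i\<^esub>\<close> has a kernel isomorphic to
\<open>r - 1\<close> copies of \<open>R\<^bsub>j-d\<^esub>\<close>. This gives
\<open>dim (I\<^sub>F)\<^sub>j = \<Sum> C(j-d+d\<^sub>i+2,2) - (r-1) C(j-d+2,2)\<close>, from which both formulas follow.
Goodness is the nonvanishing of the leading coefficients and of the pairwise Sylvester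
resultants, a polynomial in the coefficients which does not vanish at the tuple
\<open>F\<^sub>i = (x\<^sub>2 - s\<^sub>i x\<^sub>1)^d\<^sub>i\<close> with distinct \<open>s\<^sub>i\<close>.\<close>

section \<open>Polynomials as iterated power series\<close>

definition fps3 :: "'a::comm_ring_1 pol3 \<Rightarrow> 'a fps fps fps" where
  "fps3 f = Abs_fps (\<lambda>a. Abs_fps (\<lambda>b. Abs_fps (\<lambda>c. f (a,b,c))))"

lemma fps3_nth: "fps_nth (fps_nth (fps_nth (fps3 f) a) b) c = f (a,b,c)"
  by (simp add: fps3_def)

lemma fps3_inject: "fps3 f = fps3 g \<longleftrightarrow> f = g"
proof
  assume eq: "fps3 f = fps3 g"
  show "f = g"
  proof
    fix m :: mon
    obtain a b c where m: "m = (a,b,c)" by (cases m) auto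
    show "f m = g m" using arg_cong[OF eq, of "\<lambda>F. fps_nth (fps_nth (fps_nth F a) b) c"]
      by (simp add: fps3_nth m)
  qed
qed simp

lemma fps3_pmul: "fps3 (pmul f g) = fps3 f * fps3 g"
proof (rule fps_ext)+
  fix a b c
  have "fps_nth (fps_nth (fps_nth (fps3 f * fps3 g) a) b) c
     = (\<Sum>i=0..a. \<Sum>k=0..b. \<Sum>l=0..c. f (i,k,l) * g (a-i,b-k,c-l))"
    by (simp add: fps_mult_nth fps_sum_nth fps3_nth)
  also have "\<dots> = pmul f g (a,b,c)"
    by (simp add: pmul_def below_def msub_def sum.cartesian_product case_prod_beta)
  finally show "fps_nth (fps_nth (fps_nth (fps3 (pmul f g)) a) b) c
      = fps_nth (fps_nth (fps_nth (fps3 f * fps3 g) a) b) c"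
    by (simp add: fps3_nth)
qed

lemma fps3_add: "fps3 (f + g) = fps3 f + fps3 g"
  by (rule fps_ext)+ (simp add: fps3_nth)

lemma fps3_diff: "fps3 (f - g) = fps3 f - fps3 g"
  by (rule fps_ext)+ (simp add: fps3_nth)

lemma fps3_zero: "fps3 0 = 0"
  by (rule fps_ext)+ (simp add: fps3_nth)

lemma fps3_one: "fps3 pone = 1"
  by (rule fps_ext)+ (simp add: fps3_nth pone_def fps_one_nth)

lemma fps3_eq_0_iff: "fps3 f = 0 \<longleftrightarrow> f = 0"
  using fps3_inject[of f 0] by (simp add: fps3_zero)

lemma sum_fun_apply: "(\<Sum>i\<in>S. f i) x = (\<Sum>i\<in>S. f i x :: 'b::comm_monoid_add)"
  by (induction S rule: infinite_finite_induct) auto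

lemma fps3_sum: "fps3 (\<Sum>i\<in>S. f i) = (\<Sum>i\<in>S. fps3 (f i))"
  by (rule fps_ext)+ (simp add: fps3_nth fps_sum_nth sum_fun_apply)

lemma fps3_pprod: "distinct L \<Longrightarrow> fps3 (pprod (map Fs L)) = (\<Prod>x\<in>set L. fps3 (Fs x))"
  by (induction L) (simp_all add: fps3_one fps3_pmul)

lemma pmul_commute: "pmul f g = pmul g f"
  by (simp flip: fps3_inject add: fps3_pmul mult.commute)

lemma pmul_assoc: "pmul (pmul f g) h = pmul f (pmul g h)"
  by (simp flip: fps3_inject add: fps3_pmul mult.assoc)

lemma pmul_add_left: "pmul (f + g) h = pmul f h + pmul g h"
  by (simp flip: fps3_inject add: fps3_pmul fps3_add algebra_simps)

lemma pmul_add_right: "pmul h (f + g) = pmul h f + pmul h g"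
  by (simp flip: fps3_inject add: fps3_pmul fps3_add algebra_simps)

lemma pmul_diff_left: "pmul (f - g) h = pmul f h - pmul g h"
  by (simp flip: fps3_inject add: fps3_pmul fps3_diff algebra_simps)

lemma pmul_diff_right: "pmul h (f - g) = pmul h f - pmul h g"
  by (simp flip: fps3_inject add: fps3_pmul fps3_diff algebra_simps)

lemma pmul_zero_left [simp]: "pmul 0 f = 0"
  by (simp flip: fps3_inject add: fps3_pmul fps3_zero)

lemma pmul_zero_right [simp]: "pmul f 0 = 0"
  by (simp flip: fps3_inject add: fps3_pmul fps3_zero)

lemma pmul_one_left [simp]: "pmul pone f = f"
  by (simp flip: fps3_inject add: fps3_pmul fps3_one)

lemma pmul_sum_left: "pmul (\<Sum>i\<in>S. f i) h = (\<Sum>i\<in>S. pmul (f i) h)"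
  by (simp flip: fps3_inject add: fps3_pmul fps3_sum sum_distrib_right)

lemma pmul_sum_right: "pmul h (\<Sum>i\<in>S. f i) = (\<Sum>i\<in>S. pmul h (f i))"
  by (simp flip: fps3_inject add: fps3_pmul fps3_sum sum_distrib_left)

lemma pmul_eq_0_iff [simp]:
  fixes f g :: "'a::idom pol3"
  shows "pmul f g = 0 \<longleftrightarrow> f = 0 \<or> g = 0"
  by (simp flip: fps3_eq_0_iff add: fps3_pmul)

lemma pmul_scale_left: "pmul (\<lambda>m. c * f m) g = (\<lambda>m. c * pmul f g m)"
  by (simp add: pmul_def sum_distrib_left fun_eq_iff algebra_simps)

lemma pmul_scale_right: "pmul f (\<lambda>m. c * g m) = (\<lambda>m. c * pmul f g m)"
  by (simp add: pmul_def sum_distrib_left fun_eq_iff algebra_simps)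

definition homogeneous :: "'a::zero pol3 \<Rightarrow> nat \<Rightarrow> bool" where
  "homogeneous f e \<longleftrightarrow> (\<forall>m. f m \<noteq> 0 \<longrightarrow> mdeg m = e)"

definition hom_comp :: "nat \<Rightarrow> 'a::zero pol3 \<Rightarrow> 'a pol3" where
  "hom_comp k f = (\<lambda>m. if mdeg m = k then f m else 0)"

definition monomials :: "nat \<Rightarrow> mon set" where
  "monomials e = {m. mdeg m = e}"

lemma finite_monomials: "finite (monomials e)"
proof -
  have "monomials e \<subseteq> {0..e} \<times> {0..e} \<times> {0..e}" by (auto simp: monomials_def mdeg_def)
  then show ?thesis by (rule finite_subset) auto
qed

lemma mdeg_msub: "p \<in> below m \<Longrightarrow> mdeg m = mdeg p + mdeg (msub m p)"
  by (cases p; cases m) (auto simp: below_def mdeg_def msub_def)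

lemma homogeneousD: "homogeneous f k \<Longrightarrow> f m \<noteq> 0 \<Longrightarrow> mdeg m = k"
  unfolding homogeneous_def by blast

lemma homogeneous_imp_is_poly: "homogeneous f e \<Longrightarrow> is_poly f"
  unfolding is_poly_def homogeneous_def
  by (rule finite_subset[OF _ finite_monomials[of e]]) (auto simp: monomials_def)

lemma homogeneous_zero [simp]: "homogeneous 0 k"
  by (simp add: homogeneous_def)

lemma homogeneous_diff:
  "homogeneous f k \<Longrightarrow> homogeneous g k \<Longrightarrow> homogeneous (f - g :: 'a::ab_group_add pol3) k"
  by (simp add: homogeneous_def) (metis diff_self diff_zero)

lemma homogeneous_pmul:
  assumes "homogeneous f p" "homogeneous g q"
  shows "homogeneous (pmul f g) (p + q)"
  unfolding homogeneous_def
proof (intro allI impI)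
  fix m assume "pmul f g m \<noteq> 0"
  then obtain p' where p': "p' \<in> below m" "f p' * g (msub m p') \<noteq> 0"
    unfolding pmul_def by (meson sum.not_neutral_contains_not_neutral)
  then have "mdeg p' = p" "mdeg (msub m p') = q"
    using assms homogeneousD by (metis mult_zero_left mult_zero_right)+
  then show "mdeg m = p + q" using mdeg_msub[OF p'(1)] by simp
qed

lemma homogeneous_pprod:
  "(\<And>x. x \<in> set L \<Longrightarrow> homogeneous (Fs x) (ds x)) \<Longrightarrow>
     homogeneous (pprod (map Fs L)) (\<Sum>x\<leftarrow>L. ds x)"
proof (induction L)
  case Nil
  show ?case by (simp add: homogeneous_def pone_def mdeg_def)
qed (auto intro: homogeneous_pmul)

lemma homogeneous_hom_comp: "homogeneous (hom_comp k f) k"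
  by (simp add: homogeneous_def hom_comp_def)

lemma homogeneous_iff_hom_comp: "homogeneous f k \<longleftrightarrow> hom_comp k f = f"
  by (auto simp: homogeneous_def hom_comp_def fun_eq_iff)

lemma hom_comp_homogeneous: "homogeneous f k \<Longrightarrow> hom_comp k f = f"
  by (simp add: homogeneous_iff_hom_comp)

lemma hom_comp_sum: "hom_comp k (\<Sum>i\<in>S. f i :: 'a::comm_monoid_add pol3) = (\<Sum>i\<in>S. hom_comp k (f i))"
  by (auto simp: hom_comp_def sum_fun_apply fun_eq_iff)

lemma homogeneous_sum:
  "(\<And>i. i \<in> S \<Longrightarrow> homogeneous (f i) k) \<Longrightarrow> homogeneous (\<Sum>i\<in>S. f i :: 'a::comm_monoid_add pol3) k"
  by (simp add: homogeneous_iff_hom_comp hom_comp_sum)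

lemma hom_comp_pmul:
  assumes a: "homogeneous a p"
  shows "hom_comp k (pmul a g) = (if p \<le> k then pmul a (hom_comp (k - p) g) else 0)"
proof
  fix m
  have summand: "(if mdeg m = k then a q * g (msub m q) else 0)
      = (if p \<le> k then a q * hom_comp (k - p) g (msub m q) else 0)" if q: "q \<in> below m" for q
  proof (cases "a q = 0")
    case False
    then have "mdeg m = p + mdeg (msub m q)" using mdeg_msub[OF q] homogeneousD[OF a] by simp
    then show ?thesis by (auto simp: hom_comp_def)
  qed simp
  have "hom_comp k (pmul a g) m = (\<Sum>q\<in>below m. if mdeg m = k then a q * g (msub m q) else 0)"
    by (cases "mdeg m = k") (simp_all add: hom_comp_def pmul_def)
  also have "\<dots> = (\<Sum>q\<in>below m. if p \<le> k then a q * hom_comp (k - p) g (msub m q) else 0)"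
    using summand by (rule sum.cong[OF refl])
  also have "\<dots> = (if p \<le> k then pmul a (hom_comp (k - p) g) else 0) m"
    by (cases "p \<le> k") (simp_all add: pmul_def)
  finally show "hom_comp k (pmul a g) m = (if p \<le> k then pmul a (hom_comp (k - p) g) else 0) m" .
qed

definition restrict_x0 :: "'a::comm_ring_1 pol3 \<Rightarrow> 'a pol3" where
  "restrict_x0 f = (\<lambda>(a,b,c). if a = 0 then f (a,b,c) else 0)"

definition times_x0 :: "'a::comm_ring_1 pol3 \<Rightarrow> 'a pol3" where
  "times_x0 f = (\<lambda>(a,b,c). if a = 0 then 0 else f (a - 1,b,c))"

definition div_x0 :: "'a::comm_ring_1 pol3 \<Rightarrow> 'a pol3" where
  "div_x0 f = (\<lambda>(a,b,c). f (Suc a,b,c))"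

definition x0_free :: "'a::comm_ring_1 pol3 \<Rightarrow> bool" where
  "x0_free f \<longleftrightarrow> restrict_x0 f = f"

lemma fps3_restrict_x0: "fps3 (restrict_x0 f) = fps_const (fps_nth (fps3 f) 0)"
  by (rule fps_ext)+ (simp add: fps3_nth restrict_x0_def)

lemma fps3_times_x0: "fps3 (times_x0 f) = fps_X * fps3 f"
  by (rule fps_ext)+ (auto simp: fps3_nth times_x0_def fps_X_mult_nth)

lemma restrict_x0_pmul: "restrict_x0 (pmul f g) = pmul (restrict_x0 f) (restrict_x0 g)"
  by (simp flip: fps3_inject add: fps3_restrict_x0 fps3_pmul fps_mult_nth)

lemma times_x0_pmul_left: "pmul (times_x0 f) g = times_x0 (pmul f g)"
  by (simp flip: fps3_inject add: fps3_times_x0 fps3_pmul mult.assoc)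

lemma times_x0_pmul_right: "pmul g (times_x0 f) = times_x0 (pmul g f)"
  using times_x0_pmul_left pmul_commute by metis

lemma times_x0_inject: "times_x0 f = times_x0 g \<longleftrightarrow> f = g"
proof
  assume eq: "times_x0 f = times_x0 g"
  show "f = g"
  proof
    fix m :: mon
    obtain a b c where m: "m = (a,b,c)" by (cases m) auto
    show "f m = g m" using fun_cong[OF eq, of "(Suc a, b, c)"] by (simp add: times_x0_def m)
  qed
qed simp

lemma restrict_x0_eq_0_imp: "restrict_x0 f = 0 \<Longrightarrow> f = times_x0 (div_x0 f)"
  by (auto simp: restrict_x0_def times_x0_def div_x0_def fun_eq_iff split: if_splits)

lemma restrict_x0_diff: "restrict_x0 (f - g) = restrict_x0 f - restrict_x0 g"
  by (auto simp: restrict_x0_def fun_eq_iff)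

lemma x0_free_restrict_x0 [simp]: "x0_free (restrict_x0 f)"
  by (auto simp: x0_free_def restrict_x0_def fun_eq_iff)

lemma x0_free_zero [simp]: "x0_free 0"
  by (auto simp: x0_free_def restrict_x0_def fun_eq_iff)

lemma x0_free_pmul: "x0_free f \<Longrightarrow> x0_free g \<Longrightarrow> x0_free (pmul f g)"
  by (simp add: x0_free_def restrict_x0_pmul)

lemma restrict_x0_nonzero: "f (0,b,c) \<noteq> 0 \<Longrightarrow> restrict_x0 f \<noteq> 0"
  by (auto simp: restrict_x0_def fun_eq_iff)

lemma homogeneous_restrict_x0: "homogeneous f k \<Longrightarrow> homogeneous (restrict_x0 f) k"
  by (auto simp: homogeneous_def restrict_x0_def)

lemma homogeneous_div_x0:
  assumes "homogeneous f (Suc k)"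
  shows "homogeneous (div_x0 f) k"
  unfolding homogeneous_def
proof (intro allI impI)
  fix m :: mon
  assume "div_x0 f m \<noteq> 0"
  moreover obtain a b c where m: "m = (a,b,c)" by (cases m) auto
  ultimately have "f (Suc a, b, c) \<noteq> 0" by (simp add: div_x0_def)
  from homogeneousD[OF assms this] show "mdeg m = k" by (simp add: mdeg_def m)
qed

lemma homogeneous_0_restrict_x0_eq_0:
  assumes "homogeneous f 0" "restrict_x0 f = 0"
  shows "f = 0"
proof
  fix m :: mon
  obtain a b c where m: "m = (a,b,c)" by (cases m) auto
  show "f m = 0 m"
  proof (cases "a = 0")
    case True
    then show ?thesis using fun_cong[OF assms(2), of m] m by (simp add: restrict_x0_def)
  next
    case False
    then show ?thesis using assms(1) m by (auto simp: homogeneous_def mdeg_def)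
  qed
qed

section \<open>Binary forms as univariate polynomials\<close>

text \<open>A binary form of degree \<open>n\<close> in \<open>x\<^sub>1, x\<^sub>2\<close>, dehomogenized at \<open>x\<^sub>1 = 1\<close>.\<close>

definition dehom :: "nat \<Rightarrow> 'a::comm_ring_1 pol3 \<Rightarrow> 'a poly" where
  "dehom n f = (\<Sum>k\<le>n. monom (f (0, n - k, k)) k)"

definition rehom :: "nat \<Rightarrow> 'a::comm_ring_1 poly \<Rightarrow> 'a pol3" where
  "rehom n e = (\<lambda>(a,b,c). if a = 0 \<and> b + c = n then coeff e c else 0)"

lemma coeff_dehom: "coeff (dehom n f) k = (if k \<le> n then f (0, n - k, k) else 0)"
  by (simp add: dehom_def coeff_sum coeff_monom)

lemma degree_dehom: "degree (dehom n f) \<le> n"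
  by (rule degree_le) (simp add: coeff_dehom)

lemma homogeneous_binary_coeff:
  "homogeneous f p \<Longrightarrow> f (0, b, c) = (if b = p - c \<and> c \<le> p then f (0, p - c, c) else 0)"
  by (cases "f (0,b,c) = 0") (auto dest: homogeneousD simp: mdeg_def)

lemma coeff_dehom_pmul_inner:
  assumes f: "homogeneous f p" and c': "c' \<le> k" and k: "k \<le> p + q"
  shows "(\<Sum>b'\<in>{0..p+q-k}. f (0,b',c') * g (0, p+q-k-b', k-c'))
       = coeff (dehom p f) c' * coeff (dehom q g) (k - c')"
proof -
  define B where "B = p + q - k"
  have "(\<Sum>b'\<in>{0..B}. f (0,b',c') * g (0, B-b', k-c'))
      = (\<Sum>b'\<in>{0..B}. if b' = p - c' then (if c' \<le> p then f (0, p - c', c') else 0) * g (0, B-b', k-c') else 0)"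
    by (rule sum.cong[OF refl]) (subst homogeneous_binary_coeff[OF f], auto)
  also have "\<dots> = (if p - c' \<in> {0..B} then (if c' \<le> p then f (0, p - c', c') else 0) * g (0, B-(p-c'), k-c') else 0)"
    by (rule sum.delta) simp
  also have "\<dots> = coeff (dehom p f) c' * coeff (dehom q g) (k - c')"
    using c' k by (auto simp: coeff_dehom B_def)
  finally show ?thesis by (simp add: B_def)
qed

lemma dehom_pmul:
  assumes f: "homogeneous f p" and g: "homogeneous g q"
  shows "dehom (p + q) (pmul f g) = dehom p f * dehom q g"
proof (rule poly_eqI)
  fix k
  show "coeff (dehom (p + q) (pmul f g)) k = coeff (dehom p f * dehom q g) k"
  proof (cases "k \<le> p + q")
    case True
    define B where "B = p + q - k"
    have "{0::nat} \<times> ({0..B} \<times> {0..k}) = Pair 0 ` ({0..B} \<times> {0..k})" by auto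
    then have "coeff (dehom (p + q) (pmul f g)) k
        = (\<Sum>y\<in>{0..B} \<times> {0..k}. f (0,y) * g (0, B - fst y, k - snd y))"
      using True by (simp add: coeff_dehom B_def pmul_def below_def msub_def sum.reindex inj_on_def case_prod_beta)
    also have "\<dots> = (\<Sum>b'\<in>{0..B}. \<Sum>c'\<in>{0..k}. f (0,b',c') * g (0, B-b', k-c'))"
      by (simp add: sum.cartesian_product case_prod_beta)
    also have "\<dots> = (\<Sum>c'\<in>{0..k}. \<Sum>b'\<in>{0..B}. f (0,b',c') * g (0, B-b', k-c'))"
      by (rule sum.swap)
    also have "\<dots> = (\<Sum>c'\<in>{0..k}. coeff (dehom p f) c' * coeff (dehom q g) (k - c'))"
      using coeff_dehom_pmul_inner[OF f _ True] by (simp add: B_def)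
    also have "\<dots> = coeff (dehom p f * dehom q g) k"
      by (simp add: coeff_mult atMost_atLeast0)
    finally show ?thesis .
  next
    case False
    have "degree (dehom p f * dehom q g) \<le> p + q"
      using degree_mult_le[of "dehom p f" "dehom q g"] degree_dehom[of p f] degree_dehom[of q g] by simp
    then show ?thesis using False by (simp add: coeff_eq_0 coeff_dehom)
  qed
qed

lemma dehom_inject:
  assumes "homogeneous f n" "homogeneous g n" "x0_free f" "x0_free g" "dehom n f = dehom n g"
  shows "f = g"
proof
  fix m :: mon
  obtain a b c where m: "m = (a,b,c)" by (cases m) auto
  show "f m = g m"
  proof (cases "a = 0")
    case False
    have "f m = restrict_x0 f m" "g m = restrict_x0 g m" using assms(3,4) by (auto simp: x0_free_def)
    then show ?thesis using False m by (simp add: restrict_x0_def)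
  next
    case True
    have "c \<le> n \<Longrightarrow> f (0, n - c, c) = g (0, n - c, c)"
      using arg_cong[OF assms(5), of "\<lambda>e. coeff e c"] by (simp add: coeff_dehom)
    then show ?thesis
      using True m homogeneous_binary_coeff[OF assms(1), of b c] homogeneous_binary_coeff[OF assms(2), of b c]
      by auto
  qed
qed

lemma homogeneous_rehom: "homogeneous (rehom n e) n"
  by (auto simp: homogeneous_def rehom_def mdeg_def split: if_splits)

lemma x0_free_rehom: "x0_free (rehom n e)"
  by (auto simp: x0_free_def rehom_def restrict_x0_def fun_eq_iff)

lemma dehom_rehom: "degree e \<le> n \<Longrightarrow> dehom n (rehom n e) = e"
  by (rule poly_eqI) (auto simp: coeff_dehom rehom_def coeff_eq_0)

lemma binary_dvd_of_coprime:
  fixes a b c q0 :: "'a::field pol3"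
  assumes a: "homogeneous a p" "x0_free a" and b: "homogeneous b q"
    and lead: "a (0,0,p) \<noteq> 0"
    and bezout: "u * dehom p a + v * dehom q b = 1"
    and c: "homogeneous c n" "x0_free c" and q0: "homogeneous q0 (n + q - p)" and nqp: "p \<le> n + q"
    and eq: "pmul a q0 = pmul c b"
  shows "\<exists>e. homogeneous e (n - p) \<and> x0_free e \<and> c = pmul a e \<and> (p \<le> n \<or> e = 0)"
proof -
  let ?a = "dehom p a" and ?b = "dehom q b" and ?c = "dehom n c" and ?q = "dehom (n + q - p) q0"
  have quot: "?a * ?q = ?c * ?b"
    using arg_cong[OF eq, of "dehom (n + q)"] dehom_pmul[OF a(1) q0] dehom_pmul[OF c(1) b] nqp by simp
  have "?c = ?c * (u * ?a + v * ?b)" using bezout by simp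
  also have "\<dots> = ?a * (?c * u) + v * (?c * ?b)" by (simp add: algebra_simps)
  also have "\<dots> = ?a * (?c * u + ?q * v)" unfolding quot[symmetric] by (simp add: algebra_simps)
  finally have ce: "?c = ?a * (?c * u + ?q * v)" .
  have "coeff ?a p \<noteq> 0" using lead by (simp add: coeff_dehom)
  then have dega: "degree ?a = p" using degree_dehom[of p a] le_degree le_antisym by blast
  show ?thesis
  proof (cases "?c = 0")
    case True
    have "c = 0"
      using dehom_inject[OF c(1) homogeneous_zero c(2) x0_free_zero] True by (simp add: dehom_def)
    then show ?thesis by (intro exI[of _ 0]) simp
  next
    case False
    define e' where "e' = ?c * u + ?q * v"
    have nz: "?a \<noteq> 0" "e' \<noteq> 0" using False ce by (auto simp: e'_def)
    have "degree ?c = degree (?a * e')" using ce unfolding e'_def by (rule arg_cong)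
    also have "\<dots> = p + degree e'" using nz dega by (simp add: degree_mult_eq)
    finally have "degree ?c = p + degree e'" .
    with degree_dehom[of n c] have pn: "p \<le> n" and de: "degree e' \<le> n - p" by auto
    define e where "e = rehom (n - p) e'"
    have he: "homogeneous e (n - p)" "x0_free e"
      unfolding e_def by (rule homogeneous_rehom, rule x0_free_rehom)
    have "homogeneous (pmul a e) n" using homogeneous_pmul[OF a(1) he(1)] pn by simp
    moreover have "dehom n (pmul a e) = dehom n c"
      using dehom_pmul[OF a(1) he(1)] pn ce dehom_rehom[OF de] by (simp add: e_def e'_def)
    ultimately have "pmul a e = c" using dehom_inject c x0_free_pmul[OF a(2) he(2)] by metis
    then show ?thesis using he pn by blast
  qed
qed

section \<open>Lifting divisibility from \<open>x\<^sub>0 = 0\<close>\<close>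

text \<open>Modulo \<open>x\<^sub>0\<close>, \<open>A\<close> divides \<open>C\<close>; subtracting the quotient leaves a multiple of \<open>x\<^sub>0\<close>.\<close>

lemma coprime_dvd_step:
  fixes A B C Q :: "'a::field pol3"
  assumes A: "homogeneous A p" and B: "homogeneous B q" and lead: "A (0,0,p) \<noteq> 0" and B0: "B \<noteq> 0"
    and bezout: "u * dehom p (restrict_x0 A) + v * dehom q (restrict_x0 B) = 1"
    and C: "homogeneous C n" and eq: "pmul A Q = pmul C B"
  obtains e C1 Q1 where "C = C1 + pmul A e" "homogeneous C1 n" "restrict_x0 C1 = 0"
    "pmul A Q1 = pmul C1 B" "restrict_x0 Q1 = 0"
proof -
  define Q0 where "Q0 = hom_comp (n + q - p) Q"
  have CB: "pmul C B = (if p \<le> n + q then pmul A Q0 else 0)"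
    using hom_comp_homogeneous[OF homogeneous_pmul[OF C B]] hom_comp_pmul[OF A, of "n + q" Q] eq
    by (simp add: Q0_def)
  show thesis
  proof (cases "p \<le> n + q")
    case False
    then have "C = 0" using CB B0 by simp
    then show thesis by (intro that[of 0 0 0]) (simp_all add: restrict_x0_def fun_eq_iff)
  next
    case True
    have eq0: "pmul (restrict_x0 A) (restrict_x0 Q0) = pmul (restrict_x0 C) (restrict_x0 B)"
      using CB True by (simp flip: restrict_x0_pmul)
    have lead0: "restrict_x0 A (0,0,p) \<noteq> 0" using lead by (simp add: restrict_x0_def)
    obtain e where e: "homogeneous e (n - p)" "x0_free e" "restrict_x0 C = pmul (restrict_x0 A) e"
        "p \<le> n \<or> e = 0"
      using binary_dvd_of_coprime[OF homogeneous_restrict_x0[OF A] x0_free_restrict_x0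
          homogeneous_restrict_x0[OF B] lead0 bezout homogeneous_restrict_x0[OF C] x0_free_restrict_x0
          homogeneous_restrict_x0[OF homogeneous_hom_comp[of "n + q - p" Q, folded Q0_def]] True eq0]
      by blast
    define C1 where "C1 = C - pmul A e"
    define Q1 where "Q1 = Q0 - pmul e B"
    have "homogeneous (pmul A e) n"
      using e(4) homogeneous_pmul[OF A e(1)] by auto
    then have "homogeneous C1 n" unfolding C1_def by (rule homogeneous_diff[OF C])
    moreover have "restrict_x0 C1 = 0"
      using e(2,3) by (simp add: C1_def restrict_x0_diff restrict_x0_pmul x0_free_def)
    moreover have "pmul A Q1 = pmul C1 B"
      using CB True by (simp add: Q1_def C1_def pmul_diff_right pmul_diff_left pmul_assoc)
    moreover have "restrict_x0 Q1 = 0"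
    proof -
      have "pmul (restrict_x0 A) (restrict_x0 Q1) = 0"
        using eq0 e(2,3) by (simp add: Q1_def restrict_x0_diff restrict_x0_pmul x0_free_def
            pmul_diff_right flip: pmul_assoc)
      then show ?thesis using restrict_x0_nonzero[of A, OF lead] by simp
    qed
    ultimately show thesis by (intro that[of C1 e Q1]) (simp_all add: C1_def)
  qed
qed

lemma coprime_dvd:
  fixes A B :: "'a::field pol3"
  assumes A: "homogeneous A p" and B: "homogeneous B q" and lead: "A (0,0,p) \<noteq> 0" and B0: "B \<noteq> 0"
    and bezout: "u * dehom p (restrict_x0 A) + v * dehom q (restrict_x0 B) = 1"
  shows "homogeneous C n \<Longrightarrow> pmul A Q = pmul C B \<Longrightarrow> \<exists>E. C = pmul A E"
proof (induction n arbitrary: C Q)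
  case (0 C Q)
  obtain e C1 where "C = C1 + pmul A e" "homogeneous C1 0" "restrict_x0 C1 = 0"
    using coprime_dvd_step[OF A B lead B0 bezout 0] by metis
  then have "C = pmul A e" using homogeneous_0_restrict_x0_eq_0 by simp
  then show ?case by blast
next
  case (Suc n C Q)
  obtain e C1 Q1 where step: "C = C1 + pmul A e" "homogeneous C1 (Suc n)" "restrict_x0 C1 = 0"
      "pmul A Q1 = pmul C1 B" "restrict_x0 Q1 = 0"
    using coprime_dvd_step[OF A B lead B0 bezout Suc(2,3)] by metis
  have C1: "C1 = times_x0 (div_x0 C1)" and Q1: "Q1 = times_x0 (div_x0 Q1)"
    using restrict_x0_eq_0_imp step(3,5) by auto
  have "pmul A (div_x0 Q1) = pmul (div_x0 C1) B"
    using step(4) by (subst (asm) C1, subst (asm) Q1)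
      (simp add: times_x0_pmul_left times_x0_pmul_right times_x0_inject)
  then obtain E where "div_x0 C1 = pmul A E"
    using Suc.IH homogeneous_div_x0[OF step(2)] by blast
  then have "C = pmul A (times_x0 E + e)"
    using step(1) C1 by (simp add: pmul_add_right times_x0_pmul_right)
  then show ?case by blast
qed

section \<open>Good tuples of forms and relations among the cofactors\<close>

definition good_forms :: "nat \<Rightarrow> (nat \<Rightarrow> nat) \<Rightarrow> (nat \<Rightarrow> 'a::field pol3) \<Rightarrow> bool" where
  "good_forms r ds Fs \<longleftrightarrow> (\<forall>i<r. homogeneous (Fs i) (ds i) \<and> Fs i (0,0,ds i) \<noteq> 0) \<and>
     (\<forall>i<r. \<forall>l<r. i \<noteq> l \<longrightarrow>
        (\<exists>u v. u * dehom (ds i) (restrict_x0 (Fs i)) + v * dehom (ds l) (restrict_x0 (Fs l)) = 1))"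

definition pdvd :: "'a::comm_ring_1 pol3 \<Rightarrow> 'a pol3 \<Rightarrow> bool" where
  "pdvd A C \<longleftrightarrow> (\<exists>E. C = pmul A E)"

definition form_prod :: "nat \<Rightarrow> (nat \<Rightarrow> 'a::comm_ring_1 pol3) \<Rightarrow> 'a pol3" where
  "form_prod r Fs = pprod (map Fs [0..<r])"

lemma good_forms_homogeneous: "good_forms r ds Fs \<Longrightarrow> i < r \<Longrightarrow> homogeneous (Fs i) (ds i)"
  unfolding good_forms_def by blast

lemma good_forms_nonzero: "good_forms r ds Fs \<Longrightarrow> i < r \<Longrightarrow> Fs i \<noteq> 0"
  unfolding good_forms_def by auto

lemma good_forms_pdvd_cancel:
  fixes Fs :: "nat \<Rightarrow> 'a::field pol3"
  assumes good: "good_forms r ds Fs" and i: "i < r"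
  shows "set L \<subseteq> {l. l < r \<and> l \<noteq> i} \<Longrightarrow> homogeneous h n \<Longrightarrow>
    pdvd (Fs i) (pmul h (pprod (map Fs L))) \<Longrightarrow> pdvd (Fs i) h"
proof (induction L arbitrary: h n)
  case Nil
  then show ?case by (simp add: pmul_commute[of h pone])
next
  case (Cons l L h n)
  have l: "l < r" "l \<noteq> i" using Cons.prems(1) by auto
  have hL: "homogeneous (pprod (map Fs L)) (\<Sum>x\<leftarrow>L. ds x)"
    using Cons.prems(1) good_forms_homogeneous[OF good] by (intro homogeneous_pprod) auto
  obtain E where "pmul h (pprod (map Fs (l # L))) = pmul (Fs i) E"
    using Cons.prems(3) by (auto simp: pdvd_def)
  then have E: "pmul (Fs i) E = pmul (pmul h (pprod (map Fs L))) (Fs l)"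
    by (simp add: pmul_assoc pmul_commute[of "Fs l"])
  obtain u v where bezout: "u * dehom (ds i) (restrict_x0 (Fs i)) + v * dehom (ds l) (restrict_x0 (Fs l)) = 1"
    using good i l unfolding good_forms_def by blast
  have lead: "Fs i (0,0,ds i) \<noteq> 0" using good i unfolding good_forms_def by blast
  have "pdvd (Fs i) (pmul h (pprod (map Fs L)))"
    using coprime_dvd[OF good_forms_homogeneous[OF good i] good_forms_homogeneous[OF good l(1)] lead
        good_forms_nonzero[OF good l(1)] bezout homogeneous_pmul[OF Cons.prems(2) hL] E]
    unfolding pdvd_def .
  then show ?case using Cons.IH[OF _ Cons.prems(2)] Cons.prems(1) by auto
qed

lemma fps3_cofactor: "fps3 (Defs.cofactor r Fs i) = (\<Prod>l\<in>{0..<r} - {i}. fps3 (Fs l))"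
proof -
  have "fps3 (Defs.cofactor r Fs i) = (\<Prod>l\<in>set (filter (\<lambda>l. l \<noteq> i) [0..<r]). fps3 (Fs l))"
    unfolding Defs.cofactor_def by (rule fps3_pprod) simp
  also have "set (filter (\<lambda>l. l \<noteq> i) [0..<r]) = {0..<r} - {i}" by auto
  finally show ?thesis .
qed

lemma fps3_form_prod: "fps3 (form_prod r Fs) = (\<Prod>l\<in>{0..<r}. fps3 (Fs l))"
  unfolding form_prod_def by (subst fps3_pprod) auto

lemma pmul_cofactor: "i < r \<Longrightarrow> pmul (Fs i) (Defs.cofactor r Fs i) = form_prod r Fs"
proof -
  assume "i < r"
  then have "(\<Prod>l\<in>{0..<r}. fps3 (Fs l)) = fps3 (Fs i) * (\<Prod>l\<in>{0..<r} - {i}. fps3 (Fs l))"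
    by (intro prod.remove) auto
  then show ?thesis by (simp flip: fps3_inject add: fps3_pmul fps3_cofactor fps3_form_prod)
qed

lemma cofactor_eq_pmul:
  assumes "i < r" "l < r" "l \<noteq> i"
  shows "Defs.cofactor r Fs l = pmul (Fs i) (pprod (map Fs (filter (\<lambda>x. x \<noteq> l \<and> x \<noteq> i) [0..<r])))"
proof -
  have "fps3 (pprod (map Fs (filter (\<lambda>x. x \<noteq> l \<and> x \<noteq> i) [0..<r])))
      = (\<Prod>x\<in>set (filter (\<lambda>x. x \<noteq> l \<and> x \<noteq> i) [0..<r]). fps3 (Fs x))"
    by (rule fps3_pprod) simp
  also have "set (filter (\<lambda>x. x \<noteq> l \<and> x \<noteq> i) [0..<r]) = {0..<r} - {l} - {i}" by auto
  finally have "fps3 (pprod (map Fs (filter (\<lambda>x. x \<noteq> l \<and> x \<noteq> i) [0..<r])))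
      = (\<Prod>x\<in>{0..<r} - {l} - {i}. fps3 (Fs x))" .
  moreover have "fps3 (Defs.cofactor r Fs l) = fps3 (Fs i) * (\<Prod>x\<in>{0..<r} - {l} - {i}. fps3 (Fs x))"
    unfolding fps3_cofactor using assms by (subst prod.remove[of _ i]) auto
  ultimately show ?thesis by (simp flip: fps3_inject add: fps3_pmul)
qed

lemma form_prod_nonzero:
  fixes Fs :: "nat \<Rightarrow> 'a::field pol3"
  assumes "good_forms r ds Fs"
  shows "form_prod r Fs \<noteq> 0"
proof -
  have "fps3 (Fs l) \<noteq> 0" if "l < r" for l
    using good_forms_nonzero[OF assms that] fps3_eq_0_iff by blast
  then have "fps3 (form_prod r Fs) \<noteq> 0" by (simp add: fps3_form_prod)
  then show ?thesis by (auto simp: fps3_zero)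
qed

lemma homogeneous_cofactor:
  fixes Fs :: "nat \<Rightarrow> 'a::field pol3"
  assumes good: "good_forms r ds Fs" and i: "i < r"
  shows "homogeneous (Defs.cofactor r Fs i) ((\<Sum>l<r. ds l) - ds i)"
proof -
  have "homogeneous (Defs.cofactor r Fs i) (\<Sum>l\<leftarrow>filter (\<lambda>l. l \<noteq> i) [0..<r]. ds l)"
    unfolding Defs.cofactor_def by (rule homogeneous_pprod) (use good_forms_homogeneous[OF good] in auto)
  also have "(\<Sum>l\<leftarrow>filter (\<lambda>l. l \<noteq> i) [0..<r]. ds l) = (\<Sum>l\<in>{..<r} - {i}. ds l)"
    by (subst sum_list_distinct_conv_sum_set) (auto intro: sum.cong)
  also have "\<dots> = (\<Sum>l<r. ds l) - ds i"
    using i by (simp add: sum_diff1_nat)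
  finally show ?thesis .
qed

lemma cofactor_relation_pdvd:
  fixes Fs h :: "nat \<Rightarrow> 'a::field pol3"
  assumes good: "good_forms r ds Fs" and i: "i < r" and hi: "homogeneous (h i) n"
    and rel: "(\<Sum>l<r. pmul (h l) (Defs.cofactor r Fs l)) = 0"
  shows "pdvd (Fs i) (h i)"
proof -
  define P where "P l = pprod (map Fs (filter (\<lambda>x. x \<noteq> l \<and> x \<noteq> i) [0..<r]))" for l
  have "pmul (h i) (Defs.cofactor r Fs i) = - (\<Sum>l\<in>{..<r} - {i}. pmul (h l) (Defs.cofactor r Fs l))"
    using rel i by (simp add: sum.remove[of "{..<r}" i] eq_neg_iff_add_eq_0)
  also have "\<dots> = - (\<Sum>l\<in>{..<r} - {i}. pmul (Fs i) (pmul (h l) (P l)))"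
  proof (intro arg_cong[where f=uminus] sum.cong refl)
    fix l assume "l \<in> {..<r} - {i}"
    then have "Defs.cofactor r Fs l = pmul (Fs i) (P l)"
      using i unfolding P_def by (intro cofactor_eq_pmul) auto
    then show "pmul (h l) (Defs.cofactor r Fs l) = pmul (Fs i) (pmul (h l) (P l))"
      by (metis pmul_assoc pmul_commute)
  qed
  also have "\<dots> = pmul (Fs i) (- (\<Sum>l\<in>{..<r} - {i}. pmul (h l) (P l)))"
    by (simp add: pmul_sum_right pmul_diff_right[of _ 0, simplified])
  finally have "pdvd (Fs i) (pmul (h i) (pprod (map Fs (filter (\<lambda>l. l \<noteq> i) [0..<r]))))"
    unfolding pdvd_def Defs.cofactor_def by blast
  then show ?thesis by (rule good_forms_pdvd_cancel[OF good i _ hi, rotated]) auto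
qed

lemma pmul_homogeneous_factor:
  assumes "homogeneous a p" "homogeneous (pmul a g) k"
  shows "pmul a g = (if p \<le> k then pmul a (hom_comp (k - p) g) else 0)"
  using hom_comp_pmul[OF assms(1), of k g] hom_comp_homogeneous[OF assms(2)] by simp

lemma cofactor_syzygy:
  fixes Fs h :: "nat \<Rightarrow> 'a::field pol3"
  assumes good: "good_forms r ds Fs" and d: "d = (\<Sum>l<r. ds l)"
    and h: "\<And>i. i < r \<Longrightarrow> (if d - ds i \<le> j then homogeneous (h i) (j - (d - ds i)) else h i = 0)"
    and rel: "(\<Sum>i<r. pmul (h i) (Defs.cofactor r Fs i)) = 0"
  obtains g where "\<And>i. i < r \<Longrightarrow> homogeneous (g i) (j - d)" "\<And>i. i < r \<Longrightarrow> h i = pmul (Fs i) (g i)"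
    "\<And>i. j < d \<Longrightarrow> g i = 0" "(\<Sum>i<r. g i) = 0"
proof -
  have ds_le: "ds i \<le> d" if "i < r" for i unfolding d by (rule member_le_sum) (use that in auto)
  have "\<exists>G. h i = pmul (Fs i) G" if i: "i < r" for i
  proof -
    obtain n where "homogeneous (h i) n" using h[OF i] by (metis homogeneous_zero)
    then show ?thesis using cofactor_relation_pdvd[OF good i _ rel] unfolding pdvd_def by blast
  qed
  then obtain G where G: "\<And>i. i < r \<Longrightarrow> h i = pmul (Fs i) (G i)" by metis
  define g where "g i = (if d \<le> j then hom_comp (j - d) (G i) else 0)" for i
  have hg: "h i = pmul (Fs i) (g i)" if i: "i < r" for i
  proof (cases "d - ds i \<le> j")
    case True
    then have "homogeneous (pmul (Fs i) (G i)) (j - (d - ds i))" using h[OF i] G[OF i] by simp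
    from pmul_homogeneous_factor[OF good_forms_homogeneous[OF good i] this] show ?thesis
      using G[OF i] True ds_le[OF i] by (auto simp: g_def)
  next
    case False
    then show ?thesis using h[OF i] ds_le[OF i] by (simp add: g_def)
  qed
  have "pmul (form_prod r Fs) (\<Sum>i<r. g i) = (\<Sum>i<r. pmul (g i) (pmul (Fs i) (Defs.cofactor r Fs i)))"
    by (simp add: pmul_sum_right pmul_cofactor pmul_commute)
  also have "\<dots> = (\<Sum>i<r. pmul (h i) (Defs.cofactor r Fs i))"
    by (intro sum.cong refl) (simp add: hg pmul_assoc[symmetric] pmul_commute[of "g _"])
  finally have "(\<Sum>i<r. g i) = 0" using rel form_prod_nonzero[OF good] by simp
  moreover have "homogeneous (g i) (j - d)" for i by (simp add: g_def homogeneous_hom_comp)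
  ultimately show thesis using hg by (intro that) (auto simp: g_def)
qed

context vector_space_pair
begin

lemma dim_image_inj:
  assumes lf: "Vector_Spaces.linear s1 s2 f" and inj: "inj_on f (vs1.span S)"
  shows "vs2.dim (f ` S) = vs1.dim S"
proof -
  obtain B where B: "B \<subseteq> S" "vs1.independent B" "S \<subseteq> vs1.span B" "card B = vs1.dim S"
    using vs1.basis_exists[of S] by blast
  have spanB: "vs1.span B = vs1.span S"
    using B(1,3) vs1.span_mono vs1.span_span by (metis subset_antisym)
  have injB: "inj_on f (vs1.span B)" using inj spanB by simp
  have "vs2.independent (f ` B)" using linear_dependent_inj_imageD[OF lf _ injB] B(2) by blast
  moreover have "vs2.span (f ` S) = vs2.span (f ` B)"
    using linear_span_image[OF lf, of S] linear_span_image[OF lf, of B] spanB by simp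
  ultimately have "vs2.dim (f ` S) = card (f ` B)"
    by (metis vs2.dim_span vs2.dim_eq_card_independent)
  also have "\<dots> = card B" using injB vs1.span_superset by (intro card_image) (blast intro: inj_on_subset)
  finally show ?thesis using B(4) by simp
qed

lemma independent_span_disjoint:
  assumes ind: "vs1.independent (C \<union> D)" and disj: "C \<inter> D = {}" and fin: "finite C" "finite D"
    and z: "z \<in> vs1.span C" "z \<in> vs1.span D"
  shows "z = 0"
proof -
  obtain u where u: "z = (\<Sum>v\<in>C. s1 (u v) v)" using z(1) vs1.span_finite[OF fin(1)] by auto
  obtain w where w: "z = (\<Sum>v\<in>D. s1 (w v) v)" using z(2) vs1.span_finite[OF fin(2)] by auto
  define c where "c v = (if v \<in> C then u v else - w v)" for v
  have "(\<Sum>v\<in>D. s1 (c v) v) = (\<Sum>v\<in>D. - s1 (w v) v)"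
    using disj by (intro sum.cong refl) (auto simp: c_def vs1.scale_minus_left)
  then have "(\<Sum>v\<in>C \<union> D. s1 (c v) v) = z - z"
    using disj fin u w by (simp add: sum.union_disjoint c_def sum_negf)
  then have "\<forall>v\<in>C \<union> D. c v = 0" using ind fin vs1.dependent_finite[of "C \<union> D"] by auto
  then have "\<forall>v\<in>C. u v = 0" unfolding c_def by (metis UnI1)
  then show "z = 0" using u by simp
qed

lemma inj_on_span_complement:
  assumes lf: "Vector_Spaces.linear s1 s2 f" and B: "vs1.independent B" "finite B" and BK: "BK \<subseteq> B"
    and ker: "\<And>x. x \<in> vs1.span B \<Longrightarrow> f x = 0 \<Longrightarrow> x \<in> vs1.span BK"
  shows "inj_on f (vs1.span (B - BK))"
proof (rule inj_onI)
  fix x y assume xy: "x \<in> vs1.span (B - BK)" "y \<in> vs1.span (B - BK)" "f x = f y"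
  have diff: "x - y \<in> vs1.span (B - BK)" using xy vs1.span_diff by blast
  then have "x - y \<in> vs1.span B" using vs1.span_mono[of "B - BK" B] by auto
  moreover have "f (x - y) = 0" using xy(3) linear_diff[OF lf] by simp
  ultimately have "x - y \<in> vs1.span BK" by (rule ker)
  moreover have "vs1.independent ((B - BK) \<union> BK)" using B(1) BK by (simp add: Un_absorb2)
  ultimately have "x - y = 0"
    using independent_span_disjoint[OF _ _ _ _ diff] B(2) BK finite_subset by blast
  then show "x = y" by simp
qed

lemma rank_nullity_subspace:
  assumes lf: "Vector_Spaces.linear s1 s2 f" and W: "vs1.subspace W"
    and fin: "finite Bw" and Wsp: "W \<subseteq> vs1.span Bw"
  shows "vs2.dim (f ` W) + vs1.dim {x\<in>W. f x = 0} = vs1.dim W"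
proof -
  define K where "K = {x\<in>W. f x = 0}"
  obtain BK where BK: "BK \<subseteq> K" "vs1.independent BK" "K \<subseteq> vs1.span BK" "card BK = vs1.dim K"
    using vs1.basis_exists[of K] by auto
  have "BK \<subseteq> W" using BK(1) by (auto simp: K_def)
  then obtain B where B: "BK \<subseteq> B" "B \<subseteq> W" "vs1.independent B" "W \<subseteq> vs1.span B"
    using vs1.maximal_independent_subset_extend[of BK W] BK(2) by metis
  have finB: "finite B" using vs1.independent_span_bound[OF fin B(3)] B(2) Wsp by auto
  have spB: "vs1.span B = W" using vs1.span_subspace[OF B(2) B(4) W] .
  have "f ` W = vs2.span (f ` B)" using linear_span_image[OF lf, of B] spB by simp
  also have "\<dots> = vs2.span (f ` (B - BK))"
  proof
    show "vs2.span (f ` (B - BK)) \<subseteq> vs2.span (f ` B)" by (rule vs2.span_mono) auto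
    have "f ` B \<subseteq> vs2.span (f ` (B - BK))"
    proof
      fix y assume "y \<in> f ` B"
      then obtain x where x: "x \<in> B" "y = f x" by auto
      show "y \<in> vs2.span (f ` (B - BK))"
      proof (cases "x \<in> BK")
        case True
        then show ?thesis using x BK(1) vs2.span_zero by (auto simp: K_def)
      next
        case False
        then show ?thesis using x by (auto intro: vs2.span_base)
      qed
    qed
    then show "vs2.span (f ` B) \<subseteq> vs2.span (f ` (B - BK))"
      using vs2.span_minimal vs2.subspace_span by blast
  qed
  finally have "vs2.dim (f ` W) = vs2.dim (f ` (B - BK))" using vs2.dim_span by metis
  also have "\<dots> = vs1.dim (B - BK)"
    by (rule dim_image_inj[OF lf inj_on_span_complement[OF lf B(3) finB B(1)]])
      (use spB BK(3) in \<open>auto simp: K_def\<close>)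
  also have "\<dots> = card B - card BK"
    using vs1.independent_mono[OF B(3)] B(1) finB
    by (simp add: vs1.dim_eq_card_independent card_Diff_subset finite_subset)
  finally show ?thesis
    using vs1.basis_card_eq_dim[OF B(2) B(4) B(3)] BK(4) card_mono[OF finB B(1)] by (simp add: K_def)
qed

end

definition fun_scale :: "'a::field \<Rightarrow> ('i \<Rightarrow> 'a) \<Rightarrow> ('i \<Rightarrow> 'a)" where
  "fun_scale a f = (\<lambda>x. a * f x)"

lemma vector_space_fun_scale: "vector_space (fun_scale :: 'a::field \<Rightarrow> ('i \<Rightarrow> 'a) \<Rightarrow> ('i \<Rightarrow> 'a))"
  by unfold_locales (simp_all add: fun_scale_def algebra_simps fun_eq_iff)

interpretation fv: vector_space "fun_scale :: 'a::field \<Rightarrow> ('i \<Rightarrow> 'a) \<Rightarrow> ('i \<Rightarrow> 'a)"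
  by (rule vector_space_fun_scale)

interpretation fvp: vector_space_pair "fun_scale :: 'a::field \<Rightarrow> ('i \<Rightarrow> 'a) \<Rightarrow> ('i \<Rightarrow> 'a)"
   "fun_scale :: 'a::field \<Rightarrow> ('j \<Rightarrow> 'a) \<Rightarrow> ('j \<Rightarrow> 'a)"
  by unfold_locales

lemma linear_fun_scaleI:
  assumes "\<And>x y. f (x + y) = f x + f y" "\<And>c x. f (fun_scale c x) = fun_scale c (f x)"
  shows "Vector_Spaces.linear fun_scale fun_scale (f :: ('i \<Rightarrow> 'a::field) \<Rightarrow> ('j \<Rightarrow> 'a))"
  unfolding Vector_Spaces.linear_iff
  using assms vector_space_fun_scale[where 'i='i] vector_space_fun_scale[where 'i='j] by blast

definition supported_on :: "'i set \<Rightarrow> ('i \<Rightarrow> 'a::zero) set" where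
  "supported_on T = {f. \<forall>x. x \<notin> T \<longrightarrow> f x = 0}"

definition delta_fun :: "'i \<Rightarrow> 'i \<Rightarrow> 'a::field" where
  "delta_fun t = (\<lambda>x. if x = t then 1 else 0)"

lemma supported_onD: "f \<in> supported_on T \<Longrightarrow> x \<notin> T \<Longrightarrow> f x = 0"
  by (simp add: supported_on_def)

lemma subspace_supported_on: "fv.subspace (supported_on T :: ('i \<Rightarrow> 'a::field) set)"
  unfolding fv.subspace_def by (auto simp: supported_on_def fun_scale_def)

lemma span_delta_fun:
  assumes "finite T"
  shows "fv.span (delta_fun ` T) = (supported_on T :: ('i \<Rightarrow> 'a::field) set)"
proof
  show "fv.span ((delta_fun :: 'i \<Rightarrow> 'i \<Rightarrow> 'a) ` T) \<subseteq> supported_on T"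
    by (rule fv.span_minimal[OF _ subspace_supported_on]) (auto simp: supported_on_def delta_fun_def)
  show "supported_on T \<subseteq> fv.span ((delta_fun :: 'i \<Rightarrow> 'i \<Rightarrow> 'a) ` T)"
  proof
    fix f :: "'i \<Rightarrow> 'a" assume f: "f \<in> supported_on T"
    have "f = (\<Sum>t\<in>T. fun_scale (f t) (delta_fun t))"
      using f assms by (auto simp: fun_eq_iff sum_fun_apply fun_scale_def delta_fun_def supported_on_def
          if_distrib[of "(*) _"] cong: if_cong)
    also have "\<dots> \<in> fv.span ((delta_fun :: 'i \<Rightarrow> 'i \<Rightarrow> 'a) ` T)"
      by (intro fv.span_sum fv.span_scale fv.span_base) auto
    finally show "f \<in> fv.span ((delta_fun :: 'i \<Rightarrow> 'i \<Rightarrow> 'a) ` T)" .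
  qed
qed

lemma inj_delta_fun: "inj (delta_fun :: 'i \<Rightarrow> 'i \<Rightarrow> 'a::field)"
  by (rule injI) (metis delta_fun_def one_neq_zero)

lemma independent_delta_fun:
  assumes "finite T"
  shows "fv.independent ((delta_fun :: 'i \<Rightarrow> 'i \<Rightarrow> 'a::field) ` T)"
proof
  assume "fv.dependent ((delta_fun :: 'i \<Rightarrow> 'i \<Rightarrow> 'a) ` T)"
  then obtain u where u: "\<exists>v\<in>delta_fun ` T. u v \<noteq> 0"
      "(\<Sum>v\<in>delta_fun ` T. fun_scale (u v) v) = (0 :: 'i \<Rightarrow> 'a)"
    using fv.dependent_finite[of "delta_fun ` T"] assms by auto
  obtain t where t: "t \<in> T" "u (delta_fun t) \<noteq> 0" using u(1) by auto
  have "(\<Sum>v\<in>delta_fun ` T. fun_scale (u v) v) t = (\<Sum>s\<in>T. fun_scale (u (delta_fun s)) (delta_fun s) t)"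
    by (simp add: sum_fun_apply sum.reindex inj_on_subset[OF inj_delta_fun])
  also have "\<dots> = (\<Sum>s\<in>T. if s = t then u (delta_fun t) else 0)"
    by (intro sum.cong refl) (auto simp: fun_scale_def delta_fun_def)
  also have "\<dots> = u (delta_fun t)" using t(1) assms by simp
  finally show False using u(2) t(2) by simp
qed

lemma dim_supported_on:
  assumes "finite T"
  shows "fv.dim (supported_on T :: ('i \<Rightarrow> 'a::field) set) = card T"
proof -
  have "fv.dim (supported_on T :: ('i \<Rightarrow> 'a) set) = card ((delta_fun :: 'i \<Rightarrow> 'i \<Rightarrow> 'a) ` T)"
    using fv.dim_eq_card[of "delta_fun ` T" "supported_on T"] span_delta_fun[OF assms]
      independent_delta_fun[OF assms] fv.span_eq_iff subspace_supported_on by metis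
  also have "\<dots> = card T" by (rule card_image[OF inj_on_subset[OF inj_delta_fun]]) simp
  finally show ?thesis .
qed

lemma fscale_eq_fun_scale: "fscale = fun_scale"
  by (simp add: fscale_def fun_scale_def fun_eq_iff)

text \<open>Index set of the coefficient tuples \<open>(h\<^sub>i)\<^sub>i\<close> with \<open>h\<^sub>i\<close> a form of degree
\<open>j - deg (F/F\<^sub>i)\<close>: the pair \<open>(i, m)\<close> stands for the coefficient of \<open>m\<close> in \<open>h\<^sub>i\<close>.\<close>

definition cof_index :: "nat \<Rightarrow> (nat \<Rightarrow> nat) \<Rightarrow> nat \<Rightarrow> nat \<Rightarrow> (nat \<times> mon) set" where
  "cof_index r ds d j = {(i,m). i < r \<and> d - ds i \<le> j \<and> mdeg m = j - (d - ds i)}"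

definition cof_comb :: "nat \<Rightarrow> (nat \<Rightarrow> 'a::comm_ring_1 pol3) \<Rightarrow> (nat \<times> mon \<Rightarrow> 'a) \<Rightarrow> 'a pol3" where
  "cof_comb r Fs H = (\<Sum>i<r. pmul (curry H i) (Defs.cofactor r Fs i))"

definition zero_sum_tuples :: "nat \<Rightarrow> nat \<Rightarrow> (nat \<times> mon \<Rightarrow> 'a::field) set" where
  "zero_sum_tuples r e = {g \<in> supported_on ({..<r} \<times> monomials e). \<forall>m. (\<Sum>i<r. g (i,m)) = 0}"

definition mult_forms :: "nat \<Rightarrow> (nat \<Rightarrow> 'a::comm_ring_1 pol3) \<Rightarrow> (nat \<times> mon \<Rightarrow> 'a) \<Rightarrow> nat \<times> mon \<Rightarrow> 'a" where
  "mult_forms r Fs g = (\<lambda>(i,m). if i < r then pmul (Fs i) (curry g i) m else 0)"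

lemma finite_cof_index: "finite (cof_index r ds d j)"
proof -
  have "cof_index r ds d j \<subseteq> (\<Union>i<r. {i} \<times> monomials (j - (d - ds i)))"
    by (auto simp: cof_index_def monomials_def)
  then show ?thesis by (rule finite_subset) (auto simp: finite_monomials)
qed

lemma card_cof_index:
  "card (cof_index r ds d j) = (\<Sum>i<r. if d - ds i \<le> j then card (monomials (j - (d - ds i))) else 0)"
proof -
  have "cof_index r ds d j = Sigma {i \<in> {..<r}. d - ds i \<le> j} (\<lambda>i. monomials (j - (d - ds i)))"
    by (auto simp: cof_index_def monomials_def)
  then have "card (cof_index r ds d j) = (\<Sum>i\<in>{i \<in> {..<r}. d - ds i \<le> j}. card (monomials (j - (d - ds i))))"
    by (simp add: card_SigmaI finite_monomials)
  also have "\<dots> = (\<Sum>i<r. if d - ds i \<le> j then card (monomials (j - (d - ds i))) else 0)"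
    by (rule sum.inter_filter) simp
  finally show ?thesis .
qed

lemma supported_on_cof_index_iff:
  "H \<in> supported_on (cof_index r ds d j) \<longleftrightarrow>
    (\<forall>i. if i < r \<and> d - ds i \<le> j then homogeneous (curry H i) (j - (d - ds i)) else curry H i = 0)"
  by (auto simp: supported_on_def cof_index_def homogeneous_def fun_eq_iff split: if_splits)

lemma linear_cof_comb: "Vector_Spaces.linear fun_scale fun_scale (cof_comb r (Fs :: nat \<Rightarrow> 'a::field pol3))"
proof (rule linear_fun_scaleI)
  fix x y :: "nat \<times> mon \<Rightarrow> 'a"
  have "curry (x + y) i = curry x i + curry y i" for i by auto
  then show "cof_comb r Fs (x + y) = cof_comb r Fs x + cof_comb r Fs y"
    by (simp only: cof_comb_def pmul_add_left sum.distrib)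
next
  fix c and x :: "nat \<times> mon \<Rightarrow> 'a"
  have "curry (fun_scale c x) i = (\<lambda>m. c * curry x i m)" for i by (auto simp: fun_scale_def)
  then show "cof_comb r Fs (fun_scale c x) = fun_scale c (cof_comb r Fs x)"
    by (simp only: cof_comb_def pmul_scale_left)
      (simp add: fun_scale_def fun_eq_iff sum_fun_apply sum_distrib_left curry_def)
qed

lemma linear_mult_forms: "Vector_Spaces.linear fun_scale fun_scale (mult_forms r (Fs :: nat \<Rightarrow> 'a::field pol3))"
proof (rule linear_fun_scaleI)
  fix x y :: "nat \<times> mon \<Rightarrow> 'a"
  have "curry (x + y) i = curry x i + curry y i" for i by auto
  then show "mult_forms r Fs (x + y) = mult_forms r Fs x + mult_forms r Fs y"
    by (simp only: mult_forms_def pmul_add_right) (auto simp: fun_eq_iff)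
next
  fix c and x :: "nat \<times> mon \<Rightarrow> 'a"
  have "curry (fun_scale c x) i = (\<lambda>m. c * curry x i m)" for i by (auto simp: fun_scale_def)
  then show "mult_forms r Fs (fun_scale c x) = fun_scale c (mult_forms r Fs x)"
    by (simp only: mult_forms_def pmul_scale_right) (auto simp: fun_scale_def fun_eq_iff)
qed

lemma deg_part_I_F_eq:
  fixes Fs :: "nat \<Rightarrow> 'a::field pol3"
  assumes good: "good_forms r ds Fs" and d: "d = (\<Sum>l<r. ds l)"
  shows "deg_part (I_F r Fs) j = cof_comb r Fs ` supported_on (cof_index r ds d j)"
proof
  show "deg_part (I_F r Fs) j \<subseteq> cof_comb r Fs ` supported_on (cof_index r ds d j)"
  proof
    fix f assume f: "f \<in> deg_part (I_F r Fs) j"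
    then obtain h where h: "f = (\<Sum>i<r. pmul (h i) (Defs.cofactor r Fs i))"
      by (auto simp: deg_part_def I_F_def gen_ideal_def fun_eq_iff sum_fun_apply)
    define H where "H = (\<lambda>(i,m). if i < r \<and> d - ds i \<le> j then hom_comp (j - (d - ds i)) (h i) m else 0)"
    have "H \<in> supported_on (cof_index r ds d j)"
      unfolding supported_on_cof_index_iff by (auto simp: H_def homogeneous_hom_comp[unfolded curry_def])
    moreover have "f = hom_comp j f"
      using f by (intro hom_comp_homogeneous[symmetric]) (auto simp: deg_part_def homogeneous_def)
    moreover have "hom_comp j (pmul (Defs.cofactor r Fs i) (h i)) = pmul (curry H i) (Defs.cofactor r Fs i)"
      if "i < r" for i
      using hom_comp_pmul[OF homogeneous_cofactor[OF good that, folded d], of j "h i"] that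
      by (auto simp: H_def pmul_commute curry_def cong: if_cong)
    ultimately show "f \<in> cof_comb r Fs ` supported_on (cof_index r ds d j)"
      unfolding h by (auto simp: cof_comb_def hom_comp_sum pmul_commute[of "h _"] intro!: image_eqI)
  qed
  show "cof_comb r Fs ` supported_on (cof_index r ds d j) \<subseteq> deg_part (I_F r Fs) j"
  proof
    fix f assume "f \<in> cof_comb r Fs ` supported_on (cof_index r ds d j)"
    then obtain H where H: "H \<in> supported_on (cof_index r ds d j)" and f: "f = cof_comb r Fs H" by auto
    have "homogeneous (pmul (curry H i) (Defs.cofactor r Fs i)) j" if i: "i < r" for i
    proof (cases "d - ds i \<le> j")
      case True
      then show ?thesis using H homogeneous_pmul[OF _ homogeneous_cofactor[OF good i, folded d]]
        unfolding supported_on_cof_index_iff by (metis i le_add_diff_inverse2)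
    next
      case False
      then show ?thesis using H unfolding supported_on_cof_index_iff by (metis pmul_zero_left homogeneous_zero)
    qed
    then have "homogeneous f j" unfolding f cof_comb_def by (intro homogeneous_sum) auto
    moreover have "is_poly (curry H i)" for i
      using H unfolding supported_on_cof_index_iff
      by (metis homogeneous_imp_is_poly homogeneous_zero)
    ultimately show "f \<in> deg_part (I_F r Fs) j"
      unfolding f by (auto simp: deg_part_def I_F_def gen_ideal_def cof_comb_def homogeneous_def
          sum_fun_apply fun_eq_iff intro!: exI[of _ "curry H"])
  qed
qed

lemma kernel_cof_comb_subset:
  fixes Fs :: "nat \<Rightarrow> 'a::field pol3"
  assumes good: "good_forms r ds Fs" and d: "d = (\<Sum>l<r. ds l)"
    and H: "H \<in> supported_on (cof_index r ds d j)" and rel: "cof_comb r Fs H = 0"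
  shows "H \<in> (if d \<le> j then mult_forms r Fs ` zero_sum_tuples r (j - d) else {0})"
proof -
  have "\<And>i. i < r \<Longrightarrow> if d - ds i \<le> j then homogeneous (curry H i) (j - (d - ds i)) else curry H i = 0"
    using H unfolding supported_on_cof_index_iff by (metis (full_types))
  from cofactor_syzygy[OF good d this rel[unfolded cof_comb_def]]
  obtain g where g: "\<And>i. i < r \<Longrightarrow> homogeneous (g i) (j - d)" "\<And>i. i < r \<Longrightarrow> curry H i = pmul (Fs i) (g i)"
    "\<And>i. j < d \<Longrightarrow> g i = 0" "(\<Sum>i<r. g i) = 0"
    by metis
  have outside: "H (i,m) = 0" if "\<not> i < r" for i m
    using supported_onD[OF H, of "(i,m)"] that by (auto simp: cof_index_def)
  define g' where "g' = (\<lambda>(i,m). if i < r then g i m else 0)"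
  have "mult_forms r Fs g' = H"
    using g(2) outside by (auto simp: mult_forms_def g'_def curry_def fun_eq_iff)
  moreover have "g' \<in> zero_sum_tuples r (j - d)"
    using g(1,4) by (auto simp: zero_sum_tuples_def supported_on_def monomials_def g'_def
        sum_fun_apply homogeneous_def fun_eq_iff)
  moreover have "H = 0" if "j < d"
  proof
    fix p :: "nat \<times> mon"
    obtain i m where p: "p = (i,m)" by (cases p)
    show "H p = 0 p"
      using g(2)[of i] g(3)[OF that] outside[of i m] p by (cases "i < r") (auto dest: fun_cong[of _ _ m])
  qed
  ultimately show ?thesis by auto
qed

lemma mult_forms_in_kernel_cof_comb:
  fixes Fs :: "nat \<Rightarrow> 'a::field pol3"
  assumes good: "good_forms r ds Fs" and d: "d = (\<Sum>l<r. ds l)" and dj: "d \<le> j"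
    and g: "g \<in> zero_sum_tuples r (j - d)"
  shows "mult_forms r Fs g \<in> supported_on (cof_index r ds d j)" "cof_comb r Fs (mult_forms r Fs g) = 0"
proof -
  have ds_le: "ds i \<le> d" if "i < r" for i unfolding d by (rule member_le_sum) (use that in auto)
  have "g \<in> supported_on ({..<r} \<times> monomials (j - d))" using g by (simp add: zero_sum_tuples_def)
  then have gi: "homogeneous (curry g i) (j - d)" for i
    by (auto simp: homogeneous_def supported_on_def monomials_def)
  have curry_mult: "curry (mult_forms r Fs g) i = (if i < r then pmul (Fs i) (curry g i) else 0)" for i
    by (auto simp: mult_forms_def fun_eq_iff)
  have "if i < r \<and> d - ds i \<le> j then homogeneous (curry (mult_forms r Fs g) i) (j - (d - ds i))
      else curry (mult_forms r Fs g) i = 0" for i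
  proof (cases "i < r")
    case True
    have "j - (d - ds i) = ds i + (j - d)" using dj ds_le[OF True] by simp
    then show ?thesis
      using True dj homogeneous_pmul[OF good_forms_homogeneous[OF good True] gi] by (simp add: curry_mult)
  qed (simp add: curry_mult)
  then show "mult_forms r Fs g \<in> supported_on (cof_index r ds d j)"
    unfolding supported_on_cof_index_iff by blast
  have "(\<Sum>i<r. curry g i) = 0"
    using g by (auto simp: zero_sum_tuples_def fun_eq_iff sum_fun_apply curry_def)
  have "cof_comb r Fs (mult_forms r Fs g) = (\<Sum>i<r. pmul (curry g i) (form_prod r Fs))"
    unfolding cof_comb_def curry_mult
  proof (intro sum.cong refl)
    fix i assume "i \<in> {..<r}"
    then have "pmul (pmul (curry g i) (Fs i)) (Defs.cofactor r Fs i) = pmul (curry g i) (form_prod r Fs)"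
      by (simp only: pmul_assoc pmul_cofactor lessThan_iff)
    then show "pmul (if i < r then pmul (Fs i) (curry g i) else 0) (Defs.cofactor r Fs i)
        = pmul (curry g i) (form_prod r Fs)"
      using \<open>i \<in> {..<r}\<close> by (simp add: pmul_commute[of "Fs i"])
  qed
  also have "\<dots> = 0" using \<open>(\<Sum>i<r. curry g i) = 0\<close> by (simp flip: pmul_sum_left)
  finally show "cof_comb r Fs (mult_forms r Fs g) = 0" .
qed

lemma kernel_cof_comb:
  fixes Fs :: "nat \<Rightarrow> 'a::field pol3"
  assumes good: "good_forms r ds Fs" and d: "d = (\<Sum>l<r. ds l)"
  shows "{H \<in> supported_on (cof_index r ds d j). cof_comb r Fs H = 0}
    = (if d \<le> j then mult_forms r Fs ` zero_sum_tuples r (j - d) else {0})"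
proof (cases "d \<le> j")
  case True
  show ?thesis
  proof (intro equalityI subsetI)
    fix H assume "H \<in> {H \<in> supported_on (cof_index r ds d j). cof_comb r Fs H = 0}"
    then show "H \<in> (if d \<le> j then mult_forms r Fs ` zero_sum_tuples r (j - d) else {0})"
      using kernel_cof_comb_subset[OF good d] by blast
  next
    fix H assume "H \<in> (if d \<le> j then mult_forms r Fs ` zero_sum_tuples r (j - d) else {0})"
    then show "H \<in> {H \<in> supported_on (cof_index r ds d j). cof_comb r Fs H = 0}"
      using mult_forms_in_kernel_cof_comb[OF good d True] True by auto
  qed
next
  case False
  have "cof_comb r Fs 0 = 0" by (simp add: cof_comb_def curry_def zero_fun_def[symmetric])
  moreover have "0 \<in> supported_on (cof_index r ds d j)" by (simp add: supported_on_def)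
  ultimately show ?thesis
    using kernel_cof_comb_subset[OF good d, of _ j] False by auto
qed

lemma pmul_left_cancel:
  fixes f g h :: "'a::idom pol3"
  shows "pmul f g = pmul f h \<Longrightarrow> f \<noteq> 0 \<Longrightarrow> g = h"
  using pmul_diff_right[of f g h] by simp

lemma subspace_zero_sum_tuples: "fv.subspace (zero_sum_tuples r e)"
  unfolding fv.subspace_def
  by (auto simp: zero_sum_tuples_def supported_on_def fun_scale_def sum.distrib
      sum_distrib_left[symmetric])

lemma inj_on_mult_forms:
  fixes Fs :: "nat \<Rightarrow> 'a::field pol3"
  assumes good: "good_forms r ds Fs"
  shows "inj_on (mult_forms r Fs) (fv.span (zero_sum_tuples r e))"
proof -
  have span: "fv.span (zero_sum_tuples r e :: (nat \<times> mon \<Rightarrow> 'a) set) = zero_sum_tuples r e"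
    by (rule fv.span_eq_iff[THEN iffD2, OF subspace_zero_sum_tuples])
  have "x = y" if xy: "x \<in> zero_sum_tuples r e" "y \<in> zero_sum_tuples r e"
    "mult_forms r Fs x = mult_forms r Fs y" for x y :: "nat \<times> mon \<Rightarrow> 'a"
  proof
    fix p :: "nat \<times> mon"
    obtain i m where p: "p = (i,m)" by (cases p)
    show "x p = y p"
    proof (cases "i < r")
      case True
      have "pmul (Fs i) (curry x i) = pmul (Fs i) (curry y i)"
      proof
        fix m'
        show "pmul (Fs i) (curry x i) m' = pmul (Fs i) (curry y i) m'"
          using fun_cong[OF xy(3), of "(i, m')"] True by (simp add: mult_forms_def)
      qed
      then have "curry x i = curry y i" by (rule pmul_left_cancel) (rule good_forms_nonzero[OF good True])
      from fun_cong[OF this, of m] show ?thesis using p by simp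
    next
      case False
      then have "p \<notin> {..<r} \<times> monomials e" using p by simp
      moreover have "x \<in> supported_on ({..<r} \<times> monomials e)" "y \<in> supported_on ({..<r} \<times> monomials e)"
        using xy(1,2) by (simp_all add: zero_sum_tuples_def)
      ultimately show ?thesis using supported_onD by metis
    qed
  qed
  then show ?thesis unfolding span by (rule inj_onI)
qed

lemma dim_zero_sum_tuples:
  assumes r: "r \<ge> 1"
  shows "fv.dim (zero_sum_tuples r e :: (nat \<times> mon \<Rightarrow> 'a::field) set) = (r - 1) * card (monomials e)"
proof -
  let ?T = "{..<r} \<times> monomials e"
  let ?sum = "\<lambda>(g :: nat \<times> mon \<Rightarrow> 'a) m. \<Sum>i<r. g (i,m)"
  have fin: "finite ?T" by (simp add: finite_monomials)
  have lin: "Vector_Spaces.linear fun_scale fun_scale ?sum"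
  proof (rule linear_fun_scaleI)
    fix x y :: "nat \<times> mon \<Rightarrow> 'a"
    show "?sum (x + y) = ?sum x + ?sum y" by (simp add: sum.distrib fun_eq_iff)
  next
    fix c and x :: "nat \<times> mon \<Rightarrow> 'a"
    show "?sum (fun_scale c x) = fun_scale c (?sum x)" by (simp add: fun_scale_def sum_distrib_left)
  qed
  have image: "?sum ` supported_on ?T = supported_on (monomials e)"
  proof
    show "?sum ` supported_on ?T \<subseteq> supported_on (monomials e)"
    proof (rule image_subsetI)
      fix g :: "nat \<times> mon \<Rightarrow> 'a" assume g: "g \<in> supported_on ?T"
      show "?sum g \<in> supported_on (monomials e)"
        unfolding supported_on_def by (auto simp: supported_onD[OF g])
    qed
    show "supported_on (monomials e) \<subseteq> ?sum ` supported_on ?T"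
    proof
      fix y :: "mon \<Rightarrow> 'a" assume y: "y \<in> supported_on (monomials e)"
      define g :: "nat \<times> mon \<Rightarrow> 'a" where "g = (\<lambda>(i,m). if i = 0 then y m else 0)"
      have "g \<in> supported_on ?T"
        unfolding supported_on_def g_def using supported_onD[OF y] r by auto
      moreover have "y = ?sum g" using r by (auto simp: g_def fun_eq_iff)
      ultimately show "y \<in> ?sum ` supported_on ?T" using imageI[of g "supported_on ?T" ?sum] by simp
    qed
  qed
  have kernel: "{g \<in> supported_on ?T. ?sum g = 0} = zero_sum_tuples r e"
    unfolding zero_sum_tuples_def by (simp add: fun_eq_iff)
  have "supported_on ?T \<subseteq> fv.span (delta_fun ` ?T)" by (simp add: span_delta_fun[OF fin])
  from fvp.rank_nullity_subspace[OF lin subspace_supported_on finite_imageI[OF fin] this]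
  have "fv.dim (supported_on (monomials e) :: (mon \<Rightarrow> 'a) set)
      + fv.dim (zero_sum_tuples r e :: (nat \<times> mon \<Rightarrow> 'a) set) = r * card (monomials e)"
    unfolding image kernel by (simp add: dim_supported_on fin card_cartesian_product)
  then show ?thesis by (simp add: dim_supported_on finite_monomials diff_mult_distrib)
qed

lemma dim_deg_part_I_F:
  fixes Fs :: "nat \<Rightarrow> 'a::field pol3"
  assumes good: "good_forms r ds Fs" and d: "d = (\<Sum>l<r. ds l)" and r: "r \<ge> 1"
  shows "fv.dim (deg_part (I_F r Fs) j) + (if d \<le> j then (r - 1) * card (monomials (j - d)) else 0)
    = card (cof_index r ds d j)"
proof -
  let ?S = "supported_on (cof_index r ds d j) :: (nat \<times> mon \<Rightarrow> 'a) set"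
  let ?K = "{H \<in> ?S. cof_comb r Fs H = 0}"
  have "?S \<subseteq> fv.span (delta_fun ` cof_index r ds d j)" by (simp add: span_delta_fun[OF finite_cof_index])
  from fvp.rank_nullity_subspace[OF linear_cof_comb subspace_supported_on finite_imageI[OF finite_cof_index] this]
  have rank_nullity: "fv.dim (deg_part (I_F r Fs) j) + fv.dim ?K = card (cof_index r ds d j)"
    by (simp add: dim_supported_on[OF finite_cof_index] deg_part_I_F_eq[OF good d])
  have "fv.dim ?K = (if d \<le> j then (r - 1) * card (monomials (j - d)) else 0)"
  proof (cases "d \<le> j")
    case True
    then have "fv.dim ?K = fv.dim (zero_sum_tuples r (j - d) :: (nat \<times> mon \<Rightarrow> 'a) set)"
      using kernel_cof_comb[OF good d, of j] fvp.dim_image_inj[OF linear_mult_forms inj_on_mult_forms[OF good]]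
      by simp
    then show ?thesis using True dim_zero_sum_tuples[OF r] by simp
  next
    case False
    then have "?K = fv.span {}" using kernel_cof_comb[OF good d, of j] by (simp add: fv.span_empty)
    then have "fv.dim ?K = fv.dim ({} :: (nat \<times> mon \<Rightarrow> 'a) set)" by (simp only: fv.dim_span)
    then show ?thesis using False fv.dim_eq_card_independent[OF fv.independent_empty] by simp
  qed
  then show ?thesis using rank_nullity by simp
qed

lemma monomials_Suc:
  "monomials (Suc e) = {(0,b,c) | b c. b + c = Suc e} \<union> (\<lambda>(a,b,c). (Suc a, b, c)) ` monomials e"
proof
  show "monomials (Suc e) \<subseteq> {(0,b,c) | b c. b + c = Suc e} \<union> (\<lambda>(a,b,c). (Suc a, b, c)) ` monomials e"
  proof
    fix m assume m: "m \<in> monomials (Suc e)"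
    obtain a b c where abc: "m = (a,b,c)" by (cases m)
    show "m \<in> {(0,b,c) | b c. b + c = Suc e} \<union> (\<lambda>(a,b,c). (Suc a, b, c)) ` monomials e"
    proof (cases a)
      case 0
      then show ?thesis using m abc by (auto simp: monomials_def mdeg_def)
    next
      case (Suc a')
      then have "(a',b,c) \<in> monomials e" using m abc by (auto simp: monomials_def mdeg_def)
      then show ?thesis using abc Suc by force
    qed
  qed
qed (auto simp: monomials_def mdeg_def)

lemma card_monomials: "card (monomials e) = (e + 2) choose 2"
proof (induction e)
  case 0
  have "monomials 0 = {(0,0,0)}" by (auto simp: monomials_def mdeg_def)
  then show ?case by (simp add: numeral_2_eq_2)
next
  case (Suc e)
  let ?B = "{(0::nat,b,c) | b c. b + c = Suc e}"
  have "?B = (\<lambda>c. (0, Suc e - c, c)) ` {0..Suc e}" by force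
  moreover have "inj_on (\<lambda>c. (0::nat, Suc e - c, c)) {0..Suc e}" by (auto simp: inj_on_def)
  ultimately have cardB: "card ?B = Suc (Suc e)" by (simp add: card_image)
  have "card ((\<lambda>(a::nat,b::nat,c::nat). (Suc a, b, c)) ` monomials e) = card (monomials e)"
    by (rule card_image) (auto simp: inj_on_def)
  moreover have "card (monomials (Suc e)) = card ?B + card ((\<lambda>(a::nat,b::nat,c::nat). (Suc a, b, c)) ` monomials e)"
    unfolding monomials_Suc using cardB finite_monomials[of e] by (intro card_Un_disjoint) (auto intro: card_ge_0_finite)
  ultimately show ?case using Suc cardB by (simp add: numeral_2_eq_2)
qed

lemma two_times_choose_two: "2 * int (n choose 2) = int n * (int n - 1)"
proof (induction n)
  case (Suc n)
  have "Suc n choose 2 = n + (n choose 2)" by (simp add: numeral_2_eq_2)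
  then show ?case using Suc by (simp add: algebra_simps)
qed simp

lemma square_sum_eq:
  fixes x :: "nat \<Rightarrow> 'a::comm_ring_1"
  shows "(\<Sum>i<r. x i)^2 = (\<Sum>i<r. x i^2) + 2 * (\<Sum>i<r. \<Sum>j\<in>{i<..<r}. x i * x j)"
proof (induction r)
  case (Suc r)
  have "{i<..<Suc r} = insert r {i<..<r}" if "i < r" for i using that by auto
  moreover have "{r<..<Suc r} = {}" by auto
  ultimately have "(\<Sum>i<Suc r. \<Sum>j\<in>{i<..<Suc r}. x i * x j)
      = (\<Sum>i<r. \<Sum>j\<in>{i<..<r}. x i * x j) + (\<Sum>i<r. x i) * x r"
    by (simp add: sum.distrib sum_distrib_right)
  then show ?case using Suc by (simp add: algebra_simps power2_eq_square)
qed simp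

lemma choose_two_sum_identity:
  fixes ds :: "nat \<Rightarrow> nat" and t :: nat
  assumes r: "r \<ge> 1" and d: "d = (\<Sum>i<r. ds i)"
  shows "2 * (int ((t + d) choose 2) - (\<Sum>i<r. int ((t + ds i) choose 2)) + int (r - 1) * int (t choose 2))
       = int d ^ 2 - (\<Sum>i<r. int (ds i)^2)"
proof -
  have "2 * (int ((t + d) choose 2) - (\<Sum>i<r. int ((t + ds i) choose 2)) + int (r - 1) * int (t choose 2))
     = 2 * int ((t + d) choose 2) - (\<Sum>i<r. 2 * int ((t + ds i) choose 2)) + int (r - 1) * (2 * int (t choose 2))"
    by (simp add: algebra_simps sum_distrib_left)
  also have "\<dots> = (int t + int d) * (int t + int d - 1) - (\<Sum>i<r. (int t + int (ds i)) * (int t + int (ds i) - 1))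
       + (int r - 1) * (int t * (int t - 1))"
    using r by (simp only: two_times_choose_two of_nat_add of_nat_diff) simp
  also have "(\<Sum>i<r. (int t + int (ds i)) * (int t + int (ds i) - 1))
     = int r * (int t * (int t - 1)) + (2 * int t - 1) * int d + (\<Sum>i<r. int (ds i)^2)"
    using d by (simp add: algebra_simps sum.distrib sum_distrib_left sum_subtractf power2_eq_square)
  finally show ?thesis by (simp add: algebra_simps power2_eq_square)
qed

lemma dim_deg_part_le: "fv.dim (deg_part (I :: 'a::field pol3 set) j) \<le> card (monomials j)"
proof -
  have "deg_part I j \<subseteq> fv.span ((delta_fun :: mon \<Rightarrow> mon \<Rightarrow> 'a) ` monomials j)"
    using span_delta_fun[OF finite_monomials, of j]
    by (auto simp: deg_part_def supported_on_def monomials_def)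
  then have "fv.dim (deg_part I j) \<le> card ((delta_fun :: mon \<Rightarrow> mon \<Rightarrow> 'a) ` monomials j)"
    by (rule fv.dim_le_card) (simp add: finite_monomials)
  also have "\<dots> \<le> card (monomials j)" by (rule card_image_le[OF finite_monomials])
  finally show ?thesis .
qed

lemma int_hilbert_quot_good_forms:
  fixes Fs :: "nat \<Rightarrow> 'a::field pol3"
  assumes good: "good_forms r ds Fs" and d: "d = (\<Sum>i<r. ds i)" and r: "r \<ge> 1"
  shows "int (hilbert_quot (I_F r Fs) j) = int ((j + 2) choose 2)
     - (\<Sum>i<r. if d - ds i \<le> j then int ((j - (d - ds i) + 2) choose 2) else 0)
     + (if d \<le> j then int (r - 1) * int ((j - d + 2) choose 2) else 0)"
proof -
  have "hilbert_quot (I_F r Fs) j = card (monomials j) - fv.dim (deg_part (I_F r Fs) j)"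
    by (simp add: hilbert_quot_def fscale_eq_fun_scale monomials_def)
  then have "int (hilbert_quot (I_F r Fs) j) = int (card (monomials j)) - int (fv.dim (deg_part (I_F r Fs) j))"
    using dim_deg_part_le[of "I_F r Fs" j] by simp
  moreover have "int (fv.dim (deg_part (I_F r Fs) j))
      = (\<Sum>i<r. if d - ds i \<le> j then int ((j - (d - ds i) + 2) choose 2) else 0)
        - (if d \<le> j then int (r - 1) * int ((j - d + 2) choose 2) else 0)"
    using arg_cong[OF dim_deg_part_I_F[OF good d r, of j], of int]
    unfolding card_cof_index card_monomials by (simp add: of_nat_sum if_distrib[of int] cong: if_cong)
  ultimately show ?thesis by (simp add: card_monomials)
qed

lemma hilbert_quot_good_forms_low:
  fixes Fs :: "nat \<Rightarrow> 'a::field pol3"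
  assumes good: "good_forms r ds Fs" and d: "d = (\<Sum>i<r. ds i)" and r: "r \<ge> 1" and j: "j + 1 \<le> d"
  shows "int (hilbert_quot (I_F r Fs) j) = int ((j + 2) choose 2)
     - (\<Sum>i<r. int (nat (max (int j - int d + int (ds i)) (-1) + 2) choose 2))"
proof -
  have "ds i \<le> d" if "i < r" for i unfolding d by (rule member_le_sum) (use that in auto)
  then have "nat (max (int j - int d + int (ds i)) (-1) + 2) = (if d - ds i \<le> j then j - (d - ds i) + 2 else 1)"
    if "i < r" for i
    using that by auto
  then have "(if d - ds i \<le> j then int ((j - (d - ds i) + 2) choose 2) else 0)
      = int (nat (max (int j - int d + int (ds i)) (-1) + 2) choose 2)" if "i < r" for i
    using that by simp
  then show ?thesis using int_hilbert_quot_good_forms[OF good d r, of j] j by simp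
qed

lemma hilbert_quot_good_forms_high:
  fixes Fs :: "nat \<Rightarrow> 'a::field pol3"
  assumes good: "good_forms r ds Fs" and d: "d = (\<Sum>i<r. ds i)" and r: "r \<ge> 1"
    and ds1: "\<forall>i<r. ds i \<ge> 1" and D: "D = (\<Sum>i<r. \<Sum>j\<in>{i<..<r}. ds i * ds j)"
    and j: "d \<le> j + 2"
  shows "hilbert_quot (I_F r Fs) j = D"
proof -
  define t where "t = j + 2 - d"
  have jt: "j + 2 = t + d" using j by (simp add: t_def)
  have "ds i \<le> d" if "i < r" for i unfolding d by (rule member_le_sum) (use that in auto)
  then have "t + ds i = (if d - ds i \<le> j then j - (d - ds i) + 2 else 1)" if "i < r" for i
    using that ds1 jt by auto
  then have "(if d - ds i \<le> j then int ((j - (d - ds i) + 2) choose 2) else 0) = int ((t + ds i) choose 2)"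
    if "i < r" for i
    using that by simp
  moreover have "(if d \<le> j then int (r - 1) * int ((j - d + 2) choose 2) else 0) = int (r - 1) * int (t choose 2)"
  proof (cases "d \<le> j")
    case True
    then have "j - d + 2 = t" using jt by simp
    then show ?thesis using True by simp
  next
    case False
    then have "t \<le> 1" using jt by simp
    then show ?thesis using False by simp
  qed
  ultimately have "int (hilbert_quot (I_F r Fs) j)
      = int ((t + d) choose 2) - (\<Sum>i<r. int ((t + ds i) choose 2)) + int (r - 1) * int (t choose 2)"
    using int_hilbert_quot_good_forms[OF good d r, of j] jt by simp
  then have "2 * int (hilbert_quot (I_F r Fs) j) = int d ^ 2 - (\<Sum>i<r. int (ds i)^2)"
    using choose_two_sum_identity[OF r d, of t] by simp
  also have "\<dots> = 2 * int D"
    using square_sum_eq[of "\<lambda>i. int (ds i)" r] d D by simp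
  finally show ?thesis by simp
qed

section \<open>Sylvester matrices\<close>

text \<open>Column \<open>s < q\<close> holds the coefficients of \<open>x\<^sup>s a\<close>, column \<open>q + s\<close> those of \<open>x\<^sup>s b\<close>; so
the matrix sends the coefficient vector of \<open>(U, V)\<close>, \<open>deg U < q\<close>, \<open>deg V < p\<close>, to that of
\<open>U a + V b\<close>.\<close>

definition sylvester :: "nat \<Rightarrow> nat \<Rightarrow> 'a::field poly \<Rightarrow> 'a poly \<Rightarrow> 'a mat" where
  "sylvester p q a b = mat (p + q) (p + q) (\<lambda>(k,s).
     if s < q then (if s \<le> k then coeff a (k - s) else 0)
     else (if s - q \<le> k then coeff b (k - (s - q)) else 0))"

definition vec_poly :: "nat \<Rightarrow> nat \<Rightarrow> 'a::field vec \<Rightarrow> 'a poly" where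
  "vec_poly off n w = (\<Sum>s<n. monom (w $ (off + s)) s)"

lemma sylvester_carrier: "sylvester p q a b \<in> carrier_mat (p + q) (p + q)"
  by (simp add: sylvester_def)

lemma coeff_vec_poly: "coeff (vec_poly off n w) s = (if s < n then w $ (off + s) else 0)"
  by (simp add: vec_poly_def coeff_sum coeff_monom)

lemma degree_vec_poly: "degree (vec_poly off n w) < n \<or> vec_poly off n w = 0"
proof (cases "n = 0")
  case False
  have "degree (vec_poly off n w) \<le> n - 1" by (rule degree_le) (auto simp: coeff_vec_poly)
  then show ?thesis using False by auto
qed (simp add: vec_poly_def)

lemma coeff_sylvester_combination_eq_0:
  fixes a b :: "'a::field poly"
  assumes "degree a \<le> p" "degree b \<le> q" "p + q \<le> k"
  shows "coeff (vec_poly 0 q w * a + vec_poly q p w * b) k = 0"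
proof -
  have "degree (vec_poly 0 q w * a) < p + q \<or> vec_poly 0 q w * a = 0"
    using degree_vec_poly[of 0 q w] assms(1) degree_mult_le[of "vec_poly 0 q w" a] by fastforce
  moreover have "degree (vec_poly q p w * b) < p + q \<or> vec_poly q p w * b = 0"
    using degree_vec_poly[of q p w] assms(2) degree_mult_le[of "vec_poly q p w" b] by fastforce
  ultimately have "degree (vec_poly 0 q w * a + vec_poly q p w * b) < p + q
      \<or> vec_poly 0 q w * a + vec_poly q p w * b = 0"
    using degree_add_le_max[of "vec_poly 0 q w * a" "vec_poly q p w * b"] by auto
  then show ?thesis using assms(3) by (elim disjE) (simp_all del: coeff_add add: coeff_eq_0)
qed

lemma sylvester_mult_vec:
  fixes a b :: "'a::field poly"
  assumes w: "w \<in> carrier_vec (p + q)" and k: "k < p + q"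
  shows "(sylvester p q a b *\<^sub>v w) $ k = coeff (vec_poly 0 q w * a + vec_poly q p w * b) k"
proof -
  let ?S = "sylvester p q a b"
  have "(?S *\<^sub>v w) $ k = (\<Sum>s\<in>{0..<p + q}. ?S $$ (k, s) * w $ s)"
    using k w by (simp add: scalar_prod_def sylvester_def)
  also have "\<dots> = (\<Sum>s\<in>{0..<q}. ?S $$ (k, s) * w $ s) + (\<Sum>s\<in>{q..<p + q}. ?S $$ (k, s) * w $ s)"
    by (subst sum.atLeastLessThan_concat[symmetric]) auto
  also have "(\<Sum>s\<in>{0..<q}. ?S $$ (k, s) * w $ s) = (\<Sum>s<q. coeff (monom (w $ s) s * a) k)"
    using k by (intro sum.cong) (auto simp: coeff_monom_mult sylvester_def atLeast0LessThan)
  also have "\<dots> = coeff (vec_poly 0 q w * a) k"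
    by (simp add: vec_poly_def sum_distrib_right coeff_sum)
  also have "(\<Sum>s\<in>{q..<p + q}. ?S $$ (k, s) * w $ s) = (\<Sum>s<p. ?S $$ (k, q + s) * w $ (q + s))"
    using sum.shift_bounds_nat_ivl[of "\<lambda>s. ?S $$ (k, s) * w $ s" 0 q p]
    by (simp add: add.commute atLeast0LessThan)
  also have "\<dots> = (\<Sum>s<p. coeff (monom (w $ (q + s)) s * b) k)"
    using k by (intro sum.cong) (auto simp: coeff_monom_mult sylvester_def)
  also have "\<dots> = coeff (vec_poly q p w * b) k"
    by (simp add: vec_poly_def sum_distrib_right coeff_sum)
  finally show ?thesis by simp
qed

lemma solvable_of_det_nonzero:
  fixes A :: "'a::field mat"
  assumes A: "A \<in> carrier_mat n n" and det: "det A \<noteq> 0" and y: "y \<in> carrier_vec n"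
  obtains w where "w \<in> carrier_vec n" "A *\<^sub>v w = y"
proof -
  obtain B where B: "B \<in> carrier_mat n n" "A * B = 1\<^sub>m n"
    using det_non_zero_imp_unit[OF A det, of undefined] unfolding Units_def ring_mat_def by auto
  show thesis
  proof (rule that)
    show "B *\<^sub>v y \<in> carrier_vec n" using B y by simp
    show "A *\<^sub>v (B *\<^sub>v y) = y" using assoc_mult_mat_vec[OF A B(1) y] B(2) y by simp
  qed
qed

lemma bezout_of_det_sylvester:
  fixes a b :: "'a::field poly"
  assumes da: "degree a \<le> p" and db: "degree b \<le> q" and pq: "p + q > 0"
    and det: "det (sylvester p q a b) \<noteq> 0"
  shows "\<exists>u v. u * a + v * b = 1"
proof -
  obtain w where w: "w \<in> carrier_vec (p + q)" "sylvester p q a b *\<^sub>v w = unit_vec (p + q) 0"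
    using solvable_of_det_nonzero[OF sylvester_carrier det, of "unit_vec (p + q) 0"] by auto
  have "vec_poly 0 q w * a + vec_poly q p w * b = 1"
  proof (rule poly_eqI)
    fix k
    show "coeff (vec_poly 0 q w * a + vec_poly q p w * b) k = coeff 1 k"
    proof (cases "k < p + q")
      case True
      then show ?thesis
        using sylvester_mult_vec[OF w(1) True, of a b] w(2) pq
        by (cases "k = 0") (simp_all add: coeff_1 index_unit_vec)
    next
      case False
      then have "k \<noteq> 0" using pq by auto
      then show ?thesis
        using coeff_sylvester_combination_eq_0[OF da db, of k w] False by (simp del: coeff_add add: coeff_1)
    qed
  qed
  then show ?thesis by blast
qed

lemma det_sylvester_nonzero:
  fixes a b :: "'a::field poly"
  assumes da: "degree a \<le> p" and db: "degree b \<le> q" and a0: "a \<noteq> 0"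
    and coprime: "\<And>U V. U * a + V * b = 0 \<Longrightarrow> degree V < p \<or> V = 0 \<Longrightarrow> V = 0"
  shows "det (sylvester p q a b) \<noteq> 0"
proof
  assume "det (sylvester p q a b) = 0"
  then obtain w where w: "w \<in> carrier_vec (p + q)" "w \<noteq> 0\<^sub>v (p + q)" "sylvester p q a b *\<^sub>v w = 0\<^sub>v (p + q)"
    using det_0_iff_vec_prod_zero_field[OF sylvester_carrier] by blast
  have "vec_poly 0 q w * a + vec_poly q p w * b = 0"
  proof (rule poly_eqI)
    fix k
    show "coeff (vec_poly 0 q w * a + vec_poly q p w * b) k = coeff 0 k"
    proof (cases "k < p + q")
      case True
      then show ?thesis using sylvester_mult_vec[OF w(1) True, of a b] w(3) by simp
    next
      case False
      then show ?thesis
        using coeff_sylvester_combination_eq_0[OF da db, of k w] by (simp del: coeff_add)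
    qed
  qed
  moreover from this have "vec_poly q p w = 0" by (rule coprime[OF _ degree_vec_poly])
  ultimately have "vec_poly 0 q w = 0" using a0 by simp
  have "w = 0\<^sub>v (p + q)"
  proof (rule eq_vecI)
    fix i assume "i < dim_vec (0\<^sub>v (p + q) :: 'a vec)"
    then have i: "i < p + q" by simp
    show "w $ i = 0\<^sub>v (p + q) $ i"
    proof (cases "i < q")
      case True
      then show ?thesis using \<open>vec_poly 0 q w = 0\<close> coeff_vec_poly[of 0 q w i] i by simp
    next
      case False
      then have "i - q < p" "q + (i - q) = i" using i by auto
      then show ?thesis using \<open>vec_poly q p w = 0\<close> coeff_vec_poly[of q p w "i - q"] by simp
    qed
  qed (use w in simp)
  then show False using w(2) by simp
qed

definition mon_eval :: "('v \<Rightarrow>\<^sub>0 nat) \<Rightarrow> ('v \<Rightarrow> 'a::comm_ring_1) \<Rightarrow> 'a" where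
  "mon_eval e x = (\<Prod>v\<in>Poly_Mapping.keys e. x v ^ Poly_Mapping.lookup e v)"

lemma mpeval_eq_sum_mon_eval: "mpeval G x = (\<Sum>e\<in>Poly_Mapping.keys G. Poly_Mapping.lookup G e * mon_eval e x)"
  by (simp add: mpeval_def mon_eval_def)

lemma mon_eval_superset:
  assumes "finite V" "Poly_Mapping.keys e \<subseteq> V"
  shows "mon_eval e x = (\<Prod>v\<in>V. x v ^ Poly_Mapping.lookup e v)"
  unfolding mon_eval_def
  by (rule prod.mono_neutral_left[OF assms(1) assms(2)]) (auto simp: in_keys_iff)

lemma mon_eval_add: "mon_eval (e1 + e2) x = mon_eval e1 x * mon_eval e2 x"
proof -
  let ?V = "Poly_Mapping.keys e1 \<union> Poly_Mapping.keys e2"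
  have "mon_eval (e1 + e2) x = (\<Prod>v\<in>?V. x v ^ Poly_Mapping.lookup (e1 + e2) v)"
    by (rule mon_eval_superset) (use keys_add[of e1 e2] in auto)
  also have "\<dots> = (\<Prod>v\<in>?V. x v ^ Poly_Mapping.lookup e1 v) * (\<Prod>v\<in>?V. x v ^ Poly_Mapping.lookup e2 v)"
    by (simp add: lookup_add power_add prod.distrib)
  also have "\<dots> = mon_eval e1 x * mon_eval e2 x"
    by (simp add: mon_eval_superset[symmetric])
  finally show ?thesis .
qed

lemma mpeval_superset:
  assumes "finite E" "Poly_Mapping.keys G \<subseteq> E"
  shows "mpeval G x = (\<Sum>e\<in>E. Poly_Mapping.lookup G e * mon_eval e x)"
  unfolding mpeval_eq_sum_mon_eval
  by (rule sum.mono_neutral_left[OF assms(1) assms(2)]) (auto simp: in_keys_iff)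

lemma mpeval_add: "mpeval (G1 + G2) x = mpeval G1 x + mpeval G2 x"
proof -
  let ?E = "Poly_Mapping.keys G1 \<union> Poly_Mapping.keys G2"
  have "mpeval (G1 + G2) x = (\<Sum>e\<in>?E. Poly_Mapping.lookup (G1 + G2) e * mon_eval e x)"
    by (rule mpeval_superset) (use keys_add[of G1 G2] in auto)
  also have "\<dots> = (\<Sum>e\<in>?E. Poly_Mapping.lookup G1 e * mon_eval e x) + (\<Sum>e\<in>?E. Poly_Mapping.lookup G2 e * mon_eval e x)"
    by (simp add: lookup_add algebra_simps sum.distrib)
  also have "\<dots> = mpeval G1 x + mpeval G2 x"
    by (simp add: mpeval_superset[symmetric])
  finally show ?thesis .
qed

lemma mpeval_zero [simp]: "mpeval 0 x = 0"
  by (simp add: mpeval_def)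

lemma mpeval_single: "mpeval (Poly_Mapping.single e a) x = a * mon_eval e x"
  by (simp add: mpeval_eq_sum_mon_eval)

lemma mpeval_sum: "mpeval (\<Sum>i\<in>I. G i) x = (\<Sum>i\<in>I. mpeval (G i) x)"
  by (induction I rule: infinite_finite_induct) (simp_all add: mpeval_add)

definition vars_within :: "('v \<Rightarrow> bool) \<Rightarrow> ('v, 'a::zero) mpoly \<Rightarrow> bool" where
  "vars_within P G \<longleftrightarrow> (\<forall>e\<in>Poly_Mapping.keys G. \<forall>v\<in>Poly_Mapping.keys e. P v)"

definition poly_function :: "('v \<Rightarrow> bool) \<Rightarrow> (('v \<Rightarrow> 'a::comm_ring_1) \<Rightarrow> 'a) \<Rightarrow> bool" where
  "poly_function P f \<longleftrightarrow> (\<exists>G. vars_within P G \<and> (\<forall>x. mpeval G x = f x))"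

lemma poly_function_const: "poly_function P (\<lambda>x. a)"
  unfolding poly_function_def
  by (intro exI[of _ "Poly_Mapping.single 0 a"]) (auto simp: vars_within_def mpeval_single mon_eval_def)

lemma poly_function_if:
  "(b \<Longrightarrow> poly_function P f) \<Longrightarrow> (\<not> b \<Longrightarrow> poly_function P g) \<Longrightarrow>
    poly_function P (\<lambda>x. if b then f x else g x)"
  by (cases b) auto

lemma poly_function_var: "P v \<Longrightarrow> poly_function P (\<lambda>x. x v)"
  unfolding poly_function_def
  by (intro exI[of _ "Poly_Mapping.single (Poly_Mapping.single v 1) 1"])
     (auto simp: vars_within_def mpeval_single mon_eval_def)

lemma vars_within_add:
  assumes "vars_within P G1" "vars_within P G2"
  shows "vars_within P (G1 + G2)"
  unfolding vars_within_def
proof (intro ballI)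
  fix e v assume e: "e \<in> Poly_Mapping.keys (G1 + G2)" and v: "v \<in> Poly_Mapping.keys e"
  from e have "e \<in> Poly_Mapping.keys G1 \<or> e \<in> Poly_Mapping.keys G2" using keys_add[of G1 G2] by auto
  then show "P v" using assms v unfolding vars_within_def by auto
qed

lemma poly_function_add:
  assumes "poly_function P f" "poly_function P g"
  shows "poly_function P (\<lambda>x. f x + g x)"
proof -
  obtain G1 where G1: "vars_within P G1" "\<And>x. mpeval G1 x = f x" using assms(1) by (auto simp: poly_function_def)
  obtain G2 where G2: "vars_within P G2" "\<And>x. mpeval G2 x = g x" using assms(2) by (auto simp: poly_function_def)
  show ?thesis unfolding poly_function_def
    by (intro exI[of _ "G1 + G2"] conjI vars_within_add[OF G1(1) G2(1)] allI) (simp add: mpeval_add G1(2) G2(2))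
qed

lemma vars_within_sum:
  assumes "\<And>i. i \<in> I \<Longrightarrow> vars_within P (G i)"
  shows "vars_within P (\<Sum>i\<in>I. G i)"
  unfolding vars_within_def
proof (intro ballI)
  fix e v assume e: "e \<in> Poly_Mapping.keys (\<Sum>i\<in>I. G i)" and v: "v \<in> Poly_Mapping.keys e"
  from e obtain i where "i \<in> I" "e \<in> Poly_Mapping.keys (G i)" using keys_sum[of G I] by auto
  then show "P v" using assms v unfolding vars_within_def by auto
qed

lemma poly_function_mult:
  assumes "poly_function P f" "poly_function P g"
  shows "poly_function P (\<lambda>x. f x * g x)"
proof -
  obtain G1 where G1: "vars_within P G1" "\<And>x. mpeval G1 x = f x" using assms(1) by (auto simp: poly_function_def)
  obtain G2 where G2: "vars_within P G2" "\<And>x. mpeval G2 x = g x" using assms(2) by (auto simp: poly_function_def)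
  define G where "G = (\<Sum>e1\<in>Poly_Mapping.keys G1. \<Sum>e2\<in>Poly_Mapping.keys G2.
      Poly_Mapping.single (e1 + e2) (Poly_Mapping.lookup G1 e1 * Poly_Mapping.lookup G2 e2))"
  have "vars_within P G"
    unfolding G_def
  proof (intro vars_within_sum)
    fix e1 e2 assume e: "e1 \<in> Poly_Mapping.keys G1" "e2 \<in> Poly_Mapping.keys G2"
    show "vars_within P (Poly_Mapping.single (e1 + e2) (Poly_Mapping.lookup G1 e1 * Poly_Mapping.lookup G2 e2))"
      unfolding vars_within_def
    proof (intro ballI)
      fix e v assume "e \<in> Poly_Mapping.keys (Poly_Mapping.single (e1 + e2) (Poly_Mapping.lookup G1 e1 * Poly_Mapping.lookup G2 e2))"
        and v: "v \<in> Poly_Mapping.keys e"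
      then have "e = e1 + e2" by (simp split: if_splits)
      then have "v \<in> Poly_Mapping.keys e1 \<or> v \<in> Poly_Mapping.keys e2" using v keys_add[of e1 e2] by auto
      then show "P v" using G1(1) G2(1) e unfolding vars_within_def by auto
    qed
  qed
  moreover have "mpeval G x = f x * g x" for x
  proof -
    have "mpeval G x = (\<Sum>e1\<in>Poly_Mapping.keys G1. \<Sum>e2\<in>Poly_Mapping.keys G2.
         (Poly_Mapping.lookup G1 e1 * mon_eval e1 x) * (Poly_Mapping.lookup G2 e2 * mon_eval e2 x))"
      unfolding G_def by (simp add: mpeval_sum mpeval_single mon_eval_add algebra_simps)
    also have "\<dots> = mpeval G1 x * mpeval G2 x"
      by (simp add: mpeval_eq_sum_mon_eval sum_product)
    finally show ?thesis using G1(2) G2(2) by simp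
  qed
  ultimately show ?thesis unfolding poly_function_def by blast
qed

lemma poly_function_sum:
  "(\<And>i. i \<in> I \<Longrightarrow> poly_function P (f i)) \<Longrightarrow> poly_function P (\<lambda>x. \<Sum>i\<in>I. f i x)"
  by (induction I rule: infinite_finite_induct) (simp_all add: poly_function_const poly_function_add)

lemma poly_function_prod:
  "(\<And>i. i \<in> I \<Longrightarrow> poly_function P (f i)) \<Longrightarrow> poly_function P (\<lambda>x. \<Prod>i\<in>I. f i x)"
  by (induction I rule: infinite_finite_induct) (simp_all add: poly_function_const poly_function_mult)

lemma poly_function_det:
  assumes M: "\<And>x. M x \<in> carrier_mat n n"
    and E: "\<And>i j. i < n \<Longrightarrow> j < n \<Longrightarrow> poly_function P (\<lambda>x. M x $$ (i,j))"
  shows "poly_function P (\<lambda>x. det (M x))"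
proof -
  have "det (M x) = (\<Sum>p\<in>{p. p permutes {0..<n}}. signof p * (\<Prod>i = 0..<n. M x $$ (i, p i)))" for x
    using det_def'[OF M] by simp
  moreover have "poly_function P (\<lambda>x. \<Sum>p\<in>{p. p permutes {0..<n}}. signof p * (\<Prod>i = 0..<n. M x $$ (i, p i)))"
  proof (rule poly_function_sum)
    fix p assume p: "p \<in> {p. p permutes {0..<n}}"
    show "poly_function P (\<lambda>x. signof p * (\<Prod>i = 0..<n. M x $$ (i, p i)))"
    proof (rule poly_function_mult[OF poly_function_const poly_function_prod])
      fix i assume i: "i \<in> {0..<n}"
      then have "p i < n" using p permutes_in_image by fastforce
      then show "poly_function P (\<lambda>x. M x $$ (i, p i))" using E i by simp
    qed
  qed
  ultimately show ?thesis by simp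
qed


section \<open>Good tuples are general\<close>

lemma infinite_UNIV_alg_closed: "infinite (UNIV :: 'a::alg_closed_field set)"
proof
  assume fin: "finite (UNIV :: 'a set)"
  define Q :: "'a poly" where "Q = (\<Prod>a\<in>UNIV. [:-a, 1:])"
  have "degree Q = card (UNIV :: 'a set)"
    unfolding Q_def by (subst degree_prod_eq_sum_degree) auto
  moreover have "card (UNIV :: 'a set) > 0" using fin by (simp add: card_gt_0_iff)
  ultimately have "degree (Q + 1) > 0" by (simp add: degree_add_eq_left)
  then obtain x where x: "poly (Q + 1) x = 0" using alg_closed_imp_poly_has_root by blast
  have "poly Q x = 0" unfolding Q_def poly_prod by (intro prod_zero fin) (auto intro: bexI[of _ x])
  then show False using x by simp
qed

lemma linear_powers_relation:
  fixes U V :: "'a::field poly"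
  assumes st: "s \<noteq> t" and eq: "U * [:-s,1:]^p + V * [:-t,1:]^q = 0" and dV: "degree V < p \<or> V = 0"
  shows "V = 0"
proof (rule ccontr)
  assume V0: "V \<noteq> 0"
  let ?A = "[:-s,1:]^p" and ?B = "[:-t,1:]^q"
  have VB0: "V * ?B \<noteq> 0" using V0 by simp
  have "V * ?B = ?A * (- U)" using eq by (simp add: algebra_simps eq_neg_iff_add_eq_0)
  then have "p \<le> order s (V * ?B)" using order_divides VB0 by (metis dvd_triv_left)
  moreover have "order s ?B = 0" using st order_root[of ?B s] by simp
  ultimately have "p \<le> order s V" using order_mult[OF VB0] by simp
  then have "?A dvd V" using order_divides by blast
  then have "degree ?A \<le> degree V" using dvd_imp_degree_le V0 by blast
  then show False using dV V0 by (simp add: degree_linear_power)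
qed

definition binary_part :: "(nat \<Rightarrow> nat) \<Rightarrow> (nat \<times> mon \<Rightarrow> 'a::field) \<Rightarrow> nat \<Rightarrow> 'a poly" where
  "binary_part ds c i = dehom (ds i) (restrict_x0 (forms_of ds c i))"

definition index_pairs :: "nat \<Rightarrow> (nat \<times> nat) set" where
  "index_pairs r = {(i,l). i < l \<and> l < r}"

definition coeff_var :: "nat \<Rightarrow> (nat \<Rightarrow> nat) \<Rightarrow> nat \<times> mon \<Rightarrow> bool" where
  "coeff_var r ds v \<longleftrightarrow> fst v < r \<and> mdeg (snd v) = ds (fst v)"

definition good_test :: "nat \<Rightarrow> (nat \<Rightarrow> nat) \<Rightarrow> (nat \<times> mon \<Rightarrow> 'a::field) \<Rightarrow> 'a" where
  "good_test r ds c = (\<Prod>i<r. c (i,(0,0,ds i))) *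
     (\<Prod>(i,l)\<in>index_pairs r. det (sylvester (ds i) (ds l) (binary_part ds c i) (binary_part ds c l)))"

lemma coeff_binary_part: "coeff (binary_part ds c i) k = (if k \<le> ds i then c (i, (0, ds i - k, k)) else 0)"
  by (simp add: binary_part_def coeff_dehom restrict_x0_def forms_of_def form_of_def mdeg_def)

lemma degree_binary_part: "degree (binary_part ds c i) \<le> ds i"
  unfolding binary_part_def by (rule degree_dehom)

lemma finite_index_pairs: "finite (index_pairs r)"
  by (rule finite_subset[of _ "{..<r} \<times> {..<r}"]) (auto simp: index_pairs_def)

lemma poly_function_good_test: "poly_function (coeff_var r ds) (good_test r ds :: (nat \<times> mon \<Rightarrow> 'a::field) \<Rightarrow> 'a)"
proof -
  have coeff: "poly_function (coeff_var r ds) (\<lambda>c :: nat \<times> mon \<Rightarrow> 'a. coeff (binary_part ds c i) k)"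
    if "i < r" for i k
    unfolding coeff_binary_part
    by (rule poly_function_if[OF poly_function_var poly_function_const]) (use that in \<open>simp add: coeff_var_def mdeg_def\<close>)
  have "poly_function (coeff_var r ds)
      (\<lambda>c :: nat \<times> mon \<Rightarrow> 'a. det (sylvester (ds i) (ds l) (binary_part ds c i) (binary_part ds c l)))"
    if "(i,l) \<in> index_pairs r" for i l
    using that by (intro poly_function_det[OF sylvester_carrier])
      (auto simp: sylvester_def index_pairs_def intro!: poly_function_if poly_function_const coeff)
  then show ?thesis unfolding good_test_def
    by (intro poly_function_mult poly_function_prod poly_function_var)
      (auto simp: coeff_var_def mdeg_def split: prod.splits)
qed

lemma good_forms_of_good_test:
  fixes c :: "nat \<times> mon \<Rightarrow> 'a::field"
  assumes test: "good_test r ds c \<noteq> 0" and ds1: "\<forall>i<r. ds i \<ge> 1"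
  shows "good_forms r ds (forms_of ds c)"
proof -
  have bezout: "\<exists>u v. u * binary_part ds c i + v * binary_part ds c l = 1" if "i < l" "l < r" for i l
  proof (rule bezout_of_det_sylvester[OF degree_binary_part degree_binary_part])
    show "det (sylvester (ds i) (ds l) (binary_part ds c i) (binary_part ds c l)) \<noteq> 0"
      using test that finite_index_pairs[of r] by (auto simp: good_test_def index_pairs_def)
  qed (use ds1 that in auto)
  show ?thesis unfolding good_forms_def
  proof (intro conjI allI impI)
    fix i assume "i < r"
    then show "homogeneous (forms_of ds c i) (ds i)" "forms_of ds c i (0, 0, ds i) \<noteq> 0"
      using test by (auto simp: homogeneous_def forms_of_def form_of_def good_test_def mdeg_def)
  next
    fix i l assume il: "i < r" "l < r" "i \<noteq> l"
    show "\<exists>u v. u * dehom (ds i) (restrict_x0 (forms_of ds c i)) + v * dehom (ds l) (restrict_x0 (forms_of ds c l)) = 1"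
    proof (cases "i < l")
      case True
      then show ?thesis using bezout[of i l] il by (simp add: binary_part_def)
    next
      case False
      then obtain u v where "u * binary_part ds c l + v * binary_part ds c i = 1" using bezout[of l i] il by auto
      then show ?thesis by (intro exI[of _ v] exI[of _ u]) (simp add: binary_part_def algebra_simps)
    qed
  qed
qed

text \<open>The witness: \<open>F\<^sub>i(0, x\<^sub>1, x\<^sub>2) = (x\<^sub>2 - s\<^sub>i x\<^sub>1)^d\<^sub>i\<close> with pairwise distinct \<open>s\<^sub>i\<close>.\<close>

lemma ex_good_test_nonzero: "\<exists>c :: nat \<times> mon \<Rightarrow> 'a::alg_closed_field. good_test r ds c \<noteq> 0"
proof -
  obtain s :: "nat \<Rightarrow> 'a" where s: "inj s" using infinite_countable_subset[OF infinite_UNIV_alg_closed] by blast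
  define c :: "nat \<times> mon \<Rightarrow> 'a" where
    "c = (\<lambda>(i,a,b,k). if a = 0 \<and> b + k = ds i then coeff ([:- s i, 1:] ^ ds i) k else 0)"
  have binary: "binary_part ds c i = [:- s i, 1:] ^ ds i" for i
    by (rule poly_eqI) (auto simp: coeff_binary_part c_def degree_linear_power coeff_eq_0)
  have "det (sylvester (ds i) (ds l) (binary_part ds c i) (binary_part ds c l)) \<noteq> 0" if "i < l" for i l
    unfolding binary
  proof (rule det_sylvester_nonzero)
    fix U V :: "'a poly"
    assume "U * [:- s i, 1:] ^ ds i + V * [:- s l, 1:] ^ ds l = 0" "degree V < ds i \<or> V = 0"
    moreover have "s i \<noteq> s l" using s that by (metis inj_eq less_irrefl)
    ultimately show "V = 0" using linear_powers_relation by blast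
  qed (simp_all add: degree_linear_power)
  moreover have "c (i,(0,0,ds i)) \<noteq> 0" for i by (simp add: c_def coeff_linear_power)
  ultimately have "good_test r ds c \<noteq> 0"
    unfolding good_test_def using finite_index_pairs[of r] by (auto simp: index_pairs_def)
  then show ?thesis by blast
qed

theorem proposition2p1:
  fixes r :: nat and ds :: "nat \<Rightarrow> nat" and d D :: nat
  assumes "r \<ge> 2"
    and "\<forall>i<r. ds i \<ge> 1"
    and "\<forall>i j. i \<le> j \<longrightarrow> j < r \<longrightarrow> ds j \<le> ds i"
    and "d = (\<Sum>i<r. ds i)"
    and "D = (\<Sum>i<r. \<Sum>j\<in>{i<..<r}. ds i * ds j)"
  shows "general_holds r ds (\<lambda>c :: nat \<times> mon \<Rightarrow> 'a::alg_closed_field.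
           (\<forall>j. d \<le> j + 2 \<longrightarrow> hilbert_quot (I_F r (forms_of ds c)) j = D) \<and>
           (\<forall>j. j + 1 \<le> d \<longrightarrow>
              int (hilbert_quot (I_F r (forms_of ds c)) j) =
                int ((j + 2) choose 2)
                - (\<Sum>i<r. int (nat (max (int j - int d + int (ds i)) (-1) + 2) choose 2))))"
proof -
  obtain G :: "(nat \<times> mon, 'a) mpoly" where G: "vars_within (coeff_var r ds) G" "\<And>c. mpeval G c = good_test r ds c"
    using poly_function_good_test[of r ds] unfolding poly_function_def by blast
  obtain c0 :: "nat \<times> mon \<Rightarrow> 'a" where "good_test r ds c0 \<noteq> 0"
    using ex_good_test_nonzero by blast
  then have "G \<noteq> 0" using G(2)[of c0] by auto
  have good: "good_forms r ds (forms_of ds c)" if "mpeval G c \<noteq> 0" for c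
    using that G(2) good_forms_of_good_test assms(2) by metis
  have r: "r \<ge> 1" using assms(1) by simp
  \<comment> \<open>The ordering \<open>d\<^sub>1 \<ge> \<dots> \<ge> d\<^sub>r\<close> (third assumption) is a normalisation that the argument never uses.\<close>
  show ?thesis
    unfolding general_holds_def
  proof (intro exI[of _ G] conjI allI impI)
    show "G \<noteq> 0" by fact
    show "\<forall>mon_e\<in>Poly_Mapping.keys G. \<forall>v\<in>Poly_Mapping.keys mon_e. fst v < r \<and> mdeg (snd v) = ds (fst v)"
      using G(1) by (simp add: vars_within_def coeff_var_def)
  next
    fix c :: "nat \<times> mon \<Rightarrow> 'a" and j assume "mpeval G c \<noteq> 0" "d \<le> j + 2"
    then show "hilbert_quot (I_F r (forms_of ds c)) j = D"
      using hilbert_quot_good_forms_high[OF good assms(4) r assms(2,5)] by blast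
  next
    fix c :: "nat \<times> mon \<Rightarrow> 'a" and j assume "mpeval G c \<noteq> 0" "j + 1 \<le> d"
    then show "int (hilbert_quot (I_F r (forms_of ds c)) j) = int ((j + 2) choose 2)
        - (\<Sum>i<r. int (nat (max (int j - int d + int (ds i)) (-1) + 2) choose 2))"
      using hilbert_quot_good_forms_low[OF good assms(4) r] by blast
  qed
qed

end
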